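(* Let $\mathrm{R}$ be a real closed field, $\mathrm{C}=\mathrm{R}[i]$, let $F/G\in\mathrm{C}(Z)\setminus\{0\}$, $\gamma\in\mathrm{C}\setminus\{0\}$ and let $\Gamma=[x_0,x_1]\times[y_0,y_1]\subset\mathrm{R}^2$ with $x_0<x_1$, $y_0<y_1$. Then $\mathrm{W}(F/G\mid\partial\Gamma)=\mathrm{W}(\gamma F/G\mid\partial\Gamma)$.
   Context: For nonzero $P\in\mathrm{R}[X]$ and $x\in\mathrm{R}$ write uniquely $P=(X-x)^{\mathrm{mult}_x(P)}P_x$ with $P_x(x)\neq0$; for $P,Q\neq0$ set $\mathrm{val}_x(P/Q)=\mathrm{mult}_x(P)-\mathrm{mult}_x(Q)$. For $P,Q\in\mathrm{R}[X]$, $x\in\mathrm{R}$: $\mathrm{Ind}^+_x(P,Q)=\tfrac12\,\mathrm{sign}(P_x(x)Q_x(x))$ and $\mathrm{Ind}^-_x(P,Q)=\tfrac12(-1)^{\mathrm{val}_x(P/Q)}\mathrm{sign}(P_x(x)Q_x(x))$ if $P\ne0$, $Q\neq0$ and $\mathrm{val}_x(P/Q)<0$, and both are $0$ otherwise; $\mathrm{Ind}_x=\mathrm{Ind}^+_x-\mathrm{Ind}^-_x$. For $a<b$, $\mathrm{Ind}_a^b(P,Q)=\mathrm{Ind}_a^+(P,Q)+\sum_{x\in(a,b)}\mathrm{Ind}_x(P,Q)-\mathrm{Ind}_b^-(P,Q)$; $\mathrm{Ind}_a^b=-\mathrm{Ind}_b^a$ if $b<a$, and $\mathrm{Ind}_a^a=0$.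 For $F\in\mathrm{C}[X,Y]$ let $F_{\rm re},F_{\rm im}\in\mathrm{R}[X,Y]$ with $F=F_{\rm re}+iF_{\rm im}$, and $\overline F=F_{\rm re}-iF_{\rm im}$. Define $\mathrm{w}(F\mid\partial\Gamma)=\tfrac12\big(\mathrm{Ind}_{x_0}^{x_1}(F_{\rm re}(T,y_0),F_{\rm im}(T,y_0))+\mathrm{Ind}_{y_0}^{y_1}(F_{\rm re}(x_1,T),F_{\rm im}(x_1,T))+\mathrm{Ind}_{x_1}^{x_0}(F_{\rm re}(T,y_1),F_{\rm im}(T,y_1))+\mathrm{Ind}_{y_1}^{y_0}(F_{\rm re}(x_0,T),F_{\rm im}(x_0,T))\big)$ and $\mathrm{W}(F\mid\partial\Gamma)=\tfrac12\big(\mathrm{w}(F\mid\partial\Gamma)+\mathrm{w}(iF\mid\partial\Gamma)\big)$. $\mathrm{C}[Z]\subset\mathrm{C}[X,Y]$ via $Z=X+iY$. For $F,G\in\mathrm{C}[X,Y]$, $G\neq0$, $\mathrm{W}(F/G\mid\partial\Gamma):=\mathrm{W}(F\overline G\mid\partial\Gamma)$ (independent of the representation). *)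

theory Defs
  imports "HOL-Computational_Algebra.Polynomial"
begin

class real_closed_field = linordered_field +
  assumes nonneg_is_square: "0 \<le> x \<Longrightarrow> \<exists>y. y * y = x"
  assumes odd_degree_root:
    "odd n \<Longrightarrow> c n \<noteq> 0 \<Longrightarrow> \<exists>x. (\<Sum>i\<le>n. c i * x ^ i) = 0"

text \<open>For nonzero P, \<open>order x P\<close> is mult_x(P) and \<open>cofac P x\<close> is P_x,
i.e. P = (X - x)^(mult_x P) * P_x.\<close>

definition cofac :: "'a::field poly \<Rightarrow> 'a \<Rightarrow> 'a poly" where
  "cofac P x = P div [:-x, 1:] ^ order x P"

definition Ind_plus :: "'a::linordered_field poly \<Rightarrow> 'a poly \<Rightarrow> 'a \<Rightarrow> 'a" where
  "Ind_plus P Q x =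
     (if P \<noteq> 0 \<and> Q \<noteq> 0 \<and> int (order x P) - int (order x Q) < 0
      then sgn (poly (cofac P x) x * poly (cofac Q x) x) / 2 else 0)"

definition Ind_minus :: "'a::linordered_field poly \<Rightarrow> 'a poly \<Rightarrow> 'a \<Rightarrow> 'a" where
  "Ind_minus P Q x =
     (if P \<noteq> 0 \<and> Q \<noteq> 0 \<and> int (order x P) - int (order x Q) < 0
      then (-1) ^ nat (int (order x Q) - int (order x P))
             * sgn (poly (cofac P x) x * poly (cofac Q x) x) / 2 else 0)"

definition Ind_pt :: "'a::linordered_field poly \<Rightarrow> 'a poly \<Rightarrow> 'a \<Rightarrow> 'a" where
  "Ind_pt P Q x = Ind_plus P Q x - Ind_minus P Q x"

text \<open>Sum over x in (a,b) of Ind_x (only finitely many nonzero terms).\<close>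
definition Ind_lt :: "'a::linordered_field poly \<Rightarrow> 'a poly \<Rightarrow> 'a \<Rightarrow> 'a \<Rightarrow> 'a" where
  "Ind_lt P Q a b = Ind_plus P Q a
      + (\<Sum>x\<in>{x. a < x \<and> x < b \<and> Ind_pt P Q x \<noteq> 0}. Ind_pt P Q x)
      - Ind_minus P Q b"

definition Ind :: "'a::linordered_field poly \<Rightarrow> 'a poly \<Rightarrow> 'a \<Rightarrow> 'a \<Rightarrow> 'a" where
  "Ind P Q a b = (if a < b then Ind_lt P Q a b
                  else if b < a then - Ind_lt P Q b a else 0)"

text \<open>An element of C = R[i] (or of R[T][i]) is a pair (re, im).\<close>

definition cmul :: "'b::comm_ring \<times> 'b \<Rightarrow> 'b \<times> 'b \<Rightarrow> 'b \<times> 'b" where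
  "cmul z w = (fst z * fst w - snd z * snd w, fst z * snd w + snd z * fst w)"

definition cconj :: "'b::ab_group_add \<times> 'b \<Rightarrow> 'b \<times> 'b" where
  "cconj z = (fst z, - snd z)"

text \<open>\<open>ceval p z\<close>: evaluation of a real polynomial p in R[Z] at a point
z = (u, v) meaning u + i v with u, v in R[T] (Horner scheme).\<close>

definition ceval :: "'a::comm_ring_1 poly \<Rightarrow> 'a poly \<times> 'a poly \<Rightarrow> 'a poly \<times> 'a poly" where
  "ceval p z = fold_coeffs (\<lambda>c acc. ([:c:] + fst (cmul z acc), snd (cmul z acc))) p (0, 0)"

text \<open>A polynomial F in C[Z] is given by a pair (Fa, Fb) of polynomials in R[Z]
with F = Fa + i Fb.  \<open>restr F (u, v)\<close> is the pair (F_re(u, v), F_im(u, v)) in R[T]^2,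
i.e. F_re, F_im in R[X,Y] with X := u, Y := v substituted.\<close>

definition restr :: "'a::comm_ring_1 poly \<times> 'a poly \<Rightarrow> 'a poly \<times> 'a poly \<Rightarrow> 'a poly \<times> 'a poly" where
  "restr F z = (let A = ceval (fst F) z; B = ceval (snd F) z
                in (fst A - snd B, snd A + fst B))"

definition cscale :: "'a::comm_ring_1 \<times> 'a \<Rightarrow> 'a poly \<times> 'a poly \<Rightarrow> 'a poly \<times> 'a poly" where
  "cscale g F = (smult (fst g) (fst F) - smult (snd g) (snd F),
                 smult (fst g) (snd F) + smult (snd g) (fst F))"

text \<open>A bivariate complex polynomial H = H_re + i H_im in C[X,Y] is represented by its
substitution map: H (u, v) = (H_re(u,v), H_im(u,v)) for u, v in R[T].\<close>

definition wnd :: "'a::linordered_field \<Rightarrow> 'a \<Rightarrow> 'a \<Rightarrow> 'a \<Rightarrow>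
    ('a poly \<times> 'a poly \<Rightarrow> 'a poly \<times> 'a poly) \<Rightarrow> 'a" where
  "wnd x0 x1 y0 y1 H =
     (Ind (fst (H ([:0,1:], [:y0:]))) (snd (H ([:0,1:], [:y0:]))) x0 x1
    + Ind (fst (H ([:x1:], [:0,1:]))) (snd (H ([:x1:], [:0,1:]))) y0 y1
    + Ind (fst (H ([:0,1:], [:y1:]))) (snd (H ([:0,1:], [:y1:]))) x1 x0
    + Ind (fst (H ([:x0:], [:0,1:]))) (snd (H ([:x0:], [:0,1:]))) y1 y0) / 2"

definition times_i :: "'b::ab_group_add \<times> 'b \<Rightarrow> 'b \<times> 'b" where
  "times_i z = (- snd z, fst z)"

definition Wnd :: "'a::linordered_field \<Rightarrow> 'a \<Rightarrow> 'a \<Rightarrow> 'a \<Rightarrow>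
    ('a poly \<times> 'a poly \<Rightarrow> 'a poly \<times> 'a poly) \<Rightarrow> 'a" where
  "Wnd x0 x1 y0 y1 H = (wnd x0 x1 y0 y1 H + wnd x0 x1 y0 y1 (\<lambda>z. times_i (H z))) / 2"

text \<open>W(F/G | boundary) := W(F * conj G | boundary), F, G in C[Z].\<close>
definition Wnd_frac :: "'a::linordered_field \<Rightarrow> 'a \<Rightarrow> 'a \<Rightarrow> 'a \<Rightarrow>
    'a poly \<times> 'a poly \<Rightarrow> 'a poly \<times> 'a poly \<Rightarrow> 'a" where
  "Wnd_frac x0 x1 y0 y1 F G =
     Wnd x0 x1 y0 y1 (\<lambda>z. cmul (restr F z) (cconj (restr G z)))"

end

theory Submission
  imports Defs "Jordan_Normal_Form.Char_Poly" "HOL-Library.Function_Algebras"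
begin

text \<open>Restrict \<open>H = F cnj(G)\<close> to a side of the rectangle and put
  \<open>J(P, Q) = Ind(P, Q) - Ind(Q, P)\<close> for its real and imaginary parts \<open>P\<close>, \<open>Q\<close>; then
  \<open>W(F/G)\<close> is a quarter of the signed sum of \<open>J\<close> over the four sides. Multiplying \<open>F\<close> by
  \<open>\<gamma> = c + i d\<close> rotates the pair \<open>(P, Q)\<close>. The index \<open>Ind(P, Q)\<close> does not change when \<open>P\<close> is
  sheared by a multiple of \<open>Q\<close> or when \<open>P\<close> and \<open>Q\<close> are rescaled, and \<open>Ind(P, Q) + Ind(Q, P)\<close>
  only depends on the signs of \<open>P/Q\<close> at the endpoints. As a rotation is composed of shears and
  scalings, \<open>J\<close> changes along each side by a difference of boundary terms. At a corner both
  adjacent sides produce the same boundary term: after splitting off the common zero of \<open>H\<close> there,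
  the two restrictions differ by a power of \<open>i\<close>, and the term is invariant under multiplication
  by \<open>i\<close>. So all changes cancel around the rectangle.

  The inversion formula for \<open>Ind(P, Q) + Ind(Q, P)\<close> uses the intermediate value theorem for
  polynomials over the real closed field \<open>R\<close>. It follows from the algebraic closedness of \<open>R[i]\<close>,
  proved by Derksen's linear algebra argument: if every endomorphism of a space of dimension not
  divisible by \<open>d\<close> has an eigenvector, then any two commuting ones have a common eigenvector;
  this is applied to operators on hermitian and on symmetric matrices.\<close>

(* Char_Poly loads HOL-Algebra, whose module scalar multiplication would shadow Polynomial.smult. *)
hide_const (open) Module.smult

section \<open>The complexification of an ordered field\<close>

datatype 'a cpx = Cpx (cre: 'a) (cim: 'a)

lemma cpx_eq_iff: "z = w \<longleftrightarrow> cre z = cre w \<and> cim z = cim w"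
  by (cases z, cases w) auto

instantiation cpx :: (comm_ring_1) comm_ring_1
begin
definition "0 = Cpx 0 0"
definition "1 = Cpx 1 0"
definition "z + w = Cpx (cre z + cre w) (cim z + cim w)"
definition "z - w = Cpx (cre z - cre w) (cim z - cim w)"
definition "- z = Cpx (- cre z) (- cim z)"
definition "z * w = Cpx (cre z * cre w - cim z * cim w) (cre z * cim w + cim z * cre w)"
instance
  by standard (auto simp: zero_cpx_def one_cpx_def plus_cpx_def minus_cpx_def uminus_cpx_def
      times_cpx_def cpx_eq_iff algebra_simps)
end

lemma cpx_simps [simp]:
  "cre 0 = 0" "cim 0 = 0" "cre 1 = 1" "cim 1 = 0"
  "cre (z + w) = cre z + cre w" "cim (z + w) = cim z + cim w"
  "cre (z - w) = cre z - cre w" "cim (z - w) = cim z - cim w"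
  "cre (- z) = - cre z" "cim (- z) = - cim z"
  "cre (z * w) = cre z * cre w - cim z * cim w" "cim (z * w) = cre z * cim w + cim z * cre w"
  by (simp_all add: zero_cpx_def one_cpx_def plus_cpx_def minus_cpx_def uminus_cpx_def times_cpx_def)

lemma cpx_numeral [simp]: "cre (numeral k) = numeral k" "cim (numeral k) = 0"
  by (induct k) (simp_all only: numeral.simps cpx_simps, simp_all)

instantiation cpx :: (linordered_field) field
begin
definition "inverse z = Cpx (cre z / (cre z * cre z + cim z * cim z)) (- cim z / (cre z * cre z + cim z * cim z))"
definition "z div (w::'a cpx) = z * inverse w"
instance
proof
  fix z :: "'a cpx"
  assume "z \<noteq> 0"
  then have "cre z \<noteq> 0 \<or> cim z \<noteq> 0" by (auto simp: cpx_eq_iff)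
  then have "cre z * cre z + cim z * cim z \<noteq> 0"
    by (simp add: sum_squares_eq_zero_iff)
  moreover have "cre z / N * cre z + cim z / N * cim z = (cre z * cre z + cim z * cim z) / N" for N
    by (simp add: add_divide_distrib)
  ultimately show "inverse z * z = 1"
    by (simp add: cpx_eq_iff inverse_cpx_def)
next
  show "inverse (0::'a cpx) = 0" by (simp add: inverse_cpx_def cpx_eq_iff)
qed (simp add: divide_cpx_def)
end

definition ofR :: "'a::comm_ring_1 \<Rightarrow> 'a cpx" where "ofR r = Cpx r 0"
definition ii :: "'a::comm_ring_1 cpx" where "ii = Cpx 0 1"
definition cnj :: "'a::comm_ring_1 cpx \<Rightarrow> 'a cpx" where "cnj z = Cpx (cre z) (- cim z)"

lemma cpx_const_simps [simp]:
  "cre (ofR r) = r" "cim (ofR r) = 0" "cre ii = 0" "cim ii = 1"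
  "cre (cnj z) = cre z" "cim (cnj z) = - cim z"
  by (simp_all add: ofR_def ii_def cnj_def)

lemma ofR_simps [simp]:
  "ofR 0 = 0" "ofR 1 = 1" "ofR (a + b) = ofR a + ofR b" "ofR (a - b) = ofR a - ofR b"
  "ofR (- a) = - ofR a" "ofR (a * b) = ofR a * ofR b"
  "ofR a = ofR b \<longleftrightarrow> a = b" "ofR a = 0 \<longleftrightarrow> a = 0"
  by (simp_all add: cpx_eq_iff)

lemma ii_neq_0 [simp]: "(ii :: 'a::comm_ring_1 cpx) \<noteq> 0"
  by (simp add: cpx_eq_iff)

lemma ii_ii_mult [simp]: "ii * ii = (-1 :: 'a::comm_ring_1 cpx)" "ii * (ii * z) = - (z :: 'a cpx)"
  by (simp_all add: cpx_eq_iff)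

lemma minus_ii_power: "(- ii :: 'a::comm_ring_1 cpx) ^ n = ii ^ (3 * n)"
proof -
  have "(- ii :: 'a cpx) = ii ^ 3" by (simp add: cpx_eq_iff numeral_3_eq_3)
  then show ?thesis by (simp add: power_mult)
qed

interpretation ofR: comm_ring_hom "ofR :: 'a::comm_ring_1 \<Rightarrow> 'a cpx"
  by unfold_locales (simp_all add: cpx_eq_iff)

interpretation ofR_poly: map_poly_comm_ring_hom "ofR :: 'a::comm_ring_1 \<Rightarrow> 'a cpx" ..

interpretation cnj: comm_ring_hom "cnj :: 'a::comm_ring_1 cpx \<Rightarrow> 'a cpx"
  by unfold_locales (simp_all add: cpx_eq_iff)

interpretation cnj_poly: map_poly_comm_ring_hom "cnj :: 'a::comm_ring_1 cpx \<Rightarrow> 'a cpx" ..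

lemma cnj_simps [simp]:
  "cnj (a + b) = cnj a + cnj b" "cnj (a - b) = cnj a - cnj b" "cnj (- a) = - cnj a"
  "cnj (a * b) = cnj a * cnj b" "cnj (cnj a) = a" "cnj (ofR r) = ofR r" "cnj ii = - ii"
  "cnj a = 0 \<longleftrightarrow> a = 0"
  by (simp_all add: cpx_eq_iff)

section \<open>Common eigenvectors of commuting operators\<close>

definition has_eigenvalues :: "'k::field itself \<Rightarrow> nat \<Rightarrow> bool" where
  "has_eigenvalues _ n \<longleftrightarrow> (\<forall>A::'k mat. A \<in> carrier_mat n n \<longrightarrow> (\<exists>l. eigenvalue A l))"

context vector_space
begin

lemma span_inter_eq_0_if_independent_disjoint:
  assumes B: "independent B" and XY: "X \<subseteq> B" "Y \<subseteq> B" "X \<inter> Y = {}"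
    and x: "x \<in> span X" "x \<in> span Y"
  shows "x = 0"
proof -
  obtain t r where t: "finite t" "t \<subseteq> X" "x = (\<Sum>a\<in>t. r a *s a)"
    using x(1) unfolding span_explicit by blast
  obtain t' r' where t': "finite t'" "t' \<subseteq> Y" "x = (\<Sum>a\<in>t'. r' a *s a)"
    using x(2) unfolding span_explicit by blast
  define w where "w a = (if a \<in> t then r a else - r' a)" for a
  have dis: "t \<inter> t' = {}" using t t' XY by blast
  have "(\<Sum>a\<in>t \<union> t'. w a *s a) = (\<Sum>a\<in>t. w a *s a) + (\<Sum>a\<in>t'. w a *s a)"
    using dis t t' by (simp add: sum.union_disjoint)
  also have "(\<Sum>a\<in>t. w a *s a) = (\<Sum>a\<in>t. r a *s a)" by (rule sum.cong) (auto simp: w_def)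
  also have "(\<Sum>a\<in>t'. w a *s a) = (\<Sum>a\<in>t'. - (r' a *s a))"
    using dis by (intro sum.cong) (auto simp: w_def)
  also have "\<dots> = - x" using t' by (simp add: sum_negf)
  finally have "(\<Sum>a\<in>t \<union> t'. w a *s a) = 0" using t by simp
  moreover have "t \<union> t' \<subseteq> B" using t t' XY by blast
  ultimately have "\<forall>a\<in>t. w a = 0"
    using independentD[OF B, of "t \<union> t'" w] t t' by blast
  then have "\<forall>a\<in>t. r a = 0" by (auto simp: w_def)
  then show ?thesis using t by simp
qed

lemma finite_independent_in_span:
  assumes "finite B0" "S \<subseteq> span B0" "independent B" "B \<subseteq> S"
  shows "finite B"
  using independent_span_bound[OF assms(1) assms(3)] assms(2,4) by blast

lemma dim_pos_if_nonzero:
  assumes "finite B0" "T \<subseteq> span B0" "x \<in> T" "x \<noteq> 0"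
  shows "dim T > 0"
proof (rule ccontr)
  assume "\<not> dim T > 0"
  obtain B where B: "B \<subseteq> T" "independent B" "T \<subseteq> span B" "card B = dim T"
    by (rule basis_exists)
  have "finite B" using finite_independent_in_span[OF assms(1,2) B(2,1)] .
  then have "B = {}" using B(4) \<open>\<not> dim T > 0\<close> by simp
  then show False using B(3) assms(3,4) by auto
qed

lemma image_span_subset_span_image_diff:
  assumes "Vector_Spaces.linear scale scale h" and K: "\<And>b. b \<in> K \<Longrightarrow> h b = 0"
  shows "h ` span B \<subseteq> span (h ` (B - K))"
proof -
  interpret h: Vector_Spaces.linear scale scale h by fact
  have "h b \<in> span (h ` (B - K))" if "b \<in> B" for b
    using K[of b] that span_zero span_base[of "h b" "h ` (B - K)"] by (cases "b \<in> K") auto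
  then have "h ` B \<subseteq> span (h ` (B - K))" by blast
  then have "span (h ` B) \<subseteq> span (h ` (B - K))" by (rule span_minimal[OF _ subspace_span])
  then show ?thesis using h.span_image by simp
qed

lemma rank_nullity:
  assumes lin: "Vector_Spaces.linear scale scale h" and S: "subspace S"
    and fin: "finite B0" "S \<subseteq> span B0"
  shows "dim S = dim {x\<in>S. h x = 0} + dim (h ` S)"
proof -
  interpret h: Vector_Spaces.linear scale scale h by fact
  let ?K = "{x\<in>S. h x = 0}"
  obtain BK where BK: "BK \<subseteq> ?K" "independent BK" "?K \<subseteq> span BK" "card BK = dim ?K"
    by (rule basis_exists)
  obtain B where B: "BK \<subseteq> B" "B \<subseteq> S" "independent B" "S \<subseteq> span B"
    using maximal_independent_subset_extend[of BK S] BK by blast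
  let ?C = "B - BK"
  have "x = 0" if "x \<in> span ?C" "h x = 0" for x
  proof -
    have "span ?C \<subseteq> S" using B(2) S by (intro span_minimal) auto
    then have "x \<in> span BK" using BK(3) that by auto
    then show ?thesis
      using span_inter_eq_0_if_independent_disjoint[OF B(3), of ?C BK x] B(1) that(1) by auto
  qed
  then have injC: "inj_on h (span ?C)"
    using h.inj_on_iff_eq_0[OF subspace_span] by blast
  have indC: "independent (h ` ?C)"
    using h.independent_injective_image[OF independent_mono[OF B(3)] injC] by simp
  have "h ` S \<subseteq> h ` span B" using B(4) by (rule image_mono)
  also have "\<dots> \<subseteq> span (h ` ?C)"
    using BK(1) by (intro image_span_subset_span_image_diff[OF lin]) auto
  finally have hS: "h ` S \<subseteq> span (h ` ?C)" .
  have "h ` ?C \<subseteq> h ` S" using B(2) by auto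
  then have "dim (h ` S) = card (h ` ?C)" using basis_card_eq_dim[OF _ hS indC] by simp
  also have "\<dots> = card ?C"
    using card_image[OF inj_on_subset[OF injC span_superset]] .
  moreover have "card B = card BK + card ?C"
    using finite_independent_in_span[OF fin B(3,2)] B(1)
    by (metis card_Diff_subset card_mono finite_subset le_add_diff_inverse)
  ultimately show ?thesis
    using basis_card_eq_dim[OF B(2,4,3)] BK(4) by simp
qed

lemma kernel_or_image_not_dvd_dim:
  assumes h: "Vector_Spaces.linear scale scale h" and S: "subspace S" "h ` S \<subseteq> S" "\<not> d dvd dim S"
    and fin: "finite B0" "S \<subseteq> span B0"
    and v: "v \<in> S" "v \<noteq> 0" "h v = 0" and x: "x \<in> S" "h x \<noteq> 0"
  shows "dim {x\<in>S. h x = 0} < dim S \<and> \<not> d dvd dim {x\<in>S. h x = 0}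
    \<or> dim (h ` S) < dim S \<and> \<not> d dvd dim (h ` S)"
proof -
  have dims: "dim S = dim {x\<in>S. h x = 0} + dim (h ` S)" by (rule rank_nullity[OF h S(1) fin])
  have "dim (h ` S) > 0"
    using dim_pos_if_nonzero[OF fin(1), of "h ` S" "h x"] S(2) fin(2) x by auto
  moreover have "dim {x\<in>S. h x = 0} > 0"
    using dim_pos_if_nonzero[OF fin(1), of "{x\<in>S. h x = 0}" v] fin(2) v by auto
  moreover have "\<not> d dvd dim {x\<in>S. h x = 0} \<or> \<not> d dvd dim (h ` S)"
    using S(3) dims dvd_add by metis
  ultimately show ?thesis using dims by auto
qed

lemma invariant_kernel_image_of_commuting:
  fixes l
  assumes f: "Vector_Spaces.linear scale scale f" and g: "Vector_Spaces.linear scale scale g"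
    and S: "subspace S" "f ` S \<subseteq> S" "g ` S \<subseteq> S" "\<forall>x\<in>S. f (g x) = g (f x)"
  defines "h \<equiv> \<lambda>x. f x - scale l x"
  shows "f ` {x\<in>S. h x = 0} \<subseteq> {x\<in>S. h x = 0}" "g ` {x\<in>S. h x = 0} \<subseteq> {x\<in>S. h x = 0}"
    and "f ` h ` S \<subseteq> h ` S" "g ` h ` S \<subseteq> h ` S" "h ` S \<subseteq> S"
proof -
  interpret f: Vector_Spaces.linear scale scale f by fact
  interpret g: Vector_Spaces.linear scale scale g by fact
  have hf: "h (f x) = f (h x)" for x
    by (simp add: h_def f.diff f.scale)
  have hg: "h (g x) = g (h x)" if "x \<in> S" for x
    using S(4) that by (simp add: h_def g.diff g.scale)
  show "f ` {x\<in>S. h x = 0} \<subseteq> {x\<in>S. h x = 0}"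
  proof safe
    fix x assume "x \<in> S" "h x = 0"
    then show "f x \<in> S" "h (f x) = 0" using S(2) hf[of x] f.zero by auto
  qed
  show "g ` {x\<in>S. h x = 0} \<subseteq> {x\<in>S. h x = 0}"
  proof safe
    fix x assume "x \<in> S" "h x = 0"
    then show "g x \<in> S" "h (g x) = 0" using S(3) hg[of x] g.zero by auto
  qed
  show "f ` h ` S \<subseteq> h ` S"
  proof safe
    fix x assume "x \<in> S"
    then have "f x \<in> S" using S(2) by auto
    then show "f (h x) \<in> h ` S" unfolding hf[symmetric] by (rule imageI)
  qed
  show "g ` h ` S \<subseteq> h ` S"
  proof safe
    fix x assume x: "x \<in> S"
    then have "g x \<in> S" using S(3) by auto
    then show "g (h x) \<in> h ` S" unfolding hg[OF x, symmetric] by (rule imageI)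
  qed
  show "h ` S \<subseteq> S"
    using S(1,2) by (auto simp: h_def intro!: subspace_diff subspace_scale)
qed

lemma independent_nth_sum_eq_0:
  assumes B: "independent (set bl)" "distinct bl"
    and sum: "(\<Sum>j<length bl. scale (u j) (bl ! j)) = 0" and j: "j < length bl"
  shows "u j = 0"
proof -
  let ?m = "length bl"
  have inj: "inj_on ((!) bl) {..<?m}"
    using B(2) by (auto simp: inj_on_def nth_eq_iff_index_eq)
  have set_bl: "set bl = (!) bl ` {..<?m}" by (auto simp: in_set_conv_nth)
  define w where "w b = u (the_inv_into {..<?m} ((!) bl) b)" for b
  have w: "w (bl ! i) = u i" if "i < ?m" for i
    unfolding w_def using the_inv_into_f_f[OF inj] that by simp
  have "(\<Sum>b\<in>set bl. scale (w b) b) = (\<Sum>i<?m. scale (u i) (bl ! i))"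
    unfolding set_bl by (subst sum.reindex[OF inj]) (auto simp: w)
  then have "\<forall>b\<in>set bl. w b = 0" using independentD[OF B(1)] sum by auto
  then show ?thesis using w[OF j] j by simp
qed

lemma eigenvector_of_matrix_eigenvector:
  fixes A :: "'a mat" and bl :: "'b list"
  defines "m \<equiv> length bl"
  assumes lin: "Vector_Spaces.linear scale scale h" and bl: "independent (set bl)" "distinct bl"
    and A: "A \<in> carrier_mat m m" "\<And>j. j < m \<Longrightarrow> h (bl ! j) = (\<Sum>i<m. scale (A $$ (i, j)) (bl ! i))"
    and u: "u \<in> carrier_vec m" "u \<noteq> 0\<^sub>v m" "A *\<^sub>v u = l \<cdot>\<^sub>v u"
  shows "h (\<Sum>j<m. scale (u $ j) (bl ! j)) = scale l (\<Sum>j<m. scale (u $ j) (bl ! j))"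
    and "(\<Sum>j<m. scale (u $ j) (bl ! j)) \<noteq> 0"
proof -
  interpret h: Vector_Spaces.linear scale scale h by fact
  have Au: "(\<Sum>j<m. A $$ (i, j) * u $ j) = l * u $ i" if "i < m" for i
  proof -
    have "(A *\<^sub>v u) $ i = (\<Sum>j<m. A $$ (i, j) * u $ j)"
      using A(1) u(1) that by (auto simp: scalar_prod_def lessThan_atLeast0)
    then show ?thesis using u(1,3) that by simp
  qed
  have "h (\<Sum>j<m. scale (u $ j) (bl ! j)) = (\<Sum>j<m. \<Sum>i<m. scale (A $$ (i, j) * u $ j) (bl ! i))"
    by (simp add: h.sum h.scale A(2) scale_sum_right mult.commute)
  also have "\<dots> = (\<Sum>i<m. \<Sum>j<m. scale (A $$ (i, j) * u $ j) (bl ! i))" by (rule sum.swap)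
  also have "\<dots> = (\<Sum>i<m. scale (l * u $ i) (bl ! i))"
    by (rule sum.cong) (auto simp: scale_sum_left[symmetric] Au)
  finally show "h (\<Sum>j<m. scale (u $ j) (bl ! j)) = scale l (\<Sum>j<m. scale (u $ j) (bl ! j))"
    by (simp add: scale_sum_right)
  show "(\<Sum>j<m. scale (u $ j) (bl ! j)) \<noteq> 0"
  proof
    assume "(\<Sum>j<m. scale (u $ j) (bl ! j)) = 0"
    then have "u $ i = 0" if "i < m" for i
      using independent_nth_sum_eq_0[of bl "\<lambda>j. u $ j"] bl that by (auto simp: m_def)
    then have "u = 0\<^sub>v m" using u(1) by (intro eq_vecI) auto
    then show False using u(2) by simp
  qed
qed

lemma eigenvector_if_has_eigenvalues:
  assumes S: "subspace S" and fin: "finite B0" "S \<subseteq> span B0"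
    and lin: "Vector_Spaces.linear scale scale h" and hS: "h ` S \<subseteq> S"
    and ev: "has_eigenvalues TYPE('a) (dim S)"
  shows "\<exists>v\<in>S. v \<noteq> 0 \<and> (\<exists>l. h v = scale l v)"
proof -
  obtain B where B: "B \<subseteq> S" "independent B" "S \<subseteq> span B" "card B = dim S"
    by (rule basis_exists)
  have "finite B" using finite_independent_in_span[OF fin B(2,1)] .
  then obtain bl where bl: "set bl = B" "distinct bl" using finite_distinct_list by blast
  define m where "m = dim S"
  have len: "length bl = m" using distinct_card[OF bl(2)] bl(1) B(4) m_def by simp
  have blB: "bl ! i \<in> B" if "i < m" for i using that len bl(1) by auto
  have coords: "v = (\<Sum>i<m. scale (representation B v (bl ! i)) (bl ! i))" if "v \<in> span B" for v
  proof -
    have "inj_on ((!) bl) {..<m}" using bl(2) len by (auto simp: inj_on_def nth_eq_iff_index_eq)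
    moreover have "B = (!) bl ` {..<m}" using bl(1) len by (auto simp: in_set_conv_nth)
    ultimately have "(\<Sum>b\<in>B. scale (representation B v b) b)
        = (\<Sum>i<m. scale (representation B v (bl ! i)) (bl ! i))"
      by (simp add: sum.reindex)
    then show ?thesis using sum_representation_eq[OF B(2) that \<open>finite B\<close> subset_refl] by simp
  qed
  define A where "A = mat m m (\<lambda>(i, j). representation B (h (bl ! j)) (bl ! i))"
  have A: "A \<in> carrier_mat m m" unfolding A_def by simp
  have hb: "h (bl ! j) = (\<Sum>i<m. scale (A $$ (i, j)) (bl ! i))" if j: "j < m" for j
  proof -
    have "h (bl ! j) \<in> span B" using hS B(1,3) blB[OF j] by blast
    then have "h (bl ! j) = (\<Sum>i<m. scale (representation B (h (bl ! j)) (bl ! i)) (bl ! i))"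
      by (rule coords)
    also have "\<dots> = (\<Sum>i<m. scale (A $$ (i, j)) (bl ! i))"
      by (rule sum.cong) (auto simp: A_def j)
    finally show ?thesis .
  qed
  obtain l where "eigenvalue A l" using ev A unfolding has_eigenvalues_def m_def by blast
  then obtain u where u: "u \<in> carrier_vec m" "u \<noteq> 0\<^sub>v m" "A *\<^sub>v u = l \<cdot>\<^sub>v u"
    unfolding eigenvalue_def eigenvector_def using A by auto
  have "(\<Sum>j<m. scale (u $ j) (bl ! j)) \<in> S"
    by (rule subspace_sum[OF S]) (use subspace_scale[OF S] blB B(1) in blast)
  with eigenvector_of_matrix_eigenvector[OF lin, of bl A u l] bl B(2) len A hb u show ?thesis
    by auto
qed

lemma common_eigenvector_of_commuting:
  assumes fin: "finite B0" and ev: "\<And>m. \<not> d dvd m \<Longrightarrow> has_eigenvalues TYPE('a) m"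
    and f: "Vector_Spaces.linear scale scale f" and g: "Vector_Spaces.linear scale scale g"
  shows "subspace S \<Longrightarrow> S \<subseteq> span B0 \<Longrightarrow> \<not> d dvd dim S
    \<Longrightarrow> f ` S \<subseteq> S \<Longrightarrow> g ` S \<subseteq> S \<Longrightarrow> \<forall>x\<in>S. f (g x) = g (f x)
    \<Longrightarrow> \<exists>v\<in>S. v \<noteq> 0 \<and> (\<exists>a. f v = scale a v) \<and> (\<exists>b. g v = scale b v)"
proof (induction "dim S" arbitrary: S rule: less_induct)
  case less
  note S = less.prems
  obtain v0 l where v0: "v0 \<in> S" "v0 \<noteq> 0" "f v0 = scale l v0"
    using eigenvector_if_has_eigenvalues[OF S(1) fin S(2) f S(4) ev[OF S(3)]] by blast
  define h where "h x = f x - scale l x" for x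
  have h: "Vector_Spaces.linear scale scale h"
    unfolding h_def[abs_def] using f
    by (simp add: vector_space_pair.linear_compose_sub vector_space_pair_def vector_space_axioms)
  let ?W = "{x\<in>S. h x = 0}" and ?U = "h ` S"
  note inv = invariant_kernel_image_of_commuting[OF f g S(1,4,5,6), of l, folded h_def]
  have from_smaller: ?case if X: "subspace X" "X \<subseteq> S" "f ` X \<subseteq> X" "g ` X \<subseteq> X"
    "dim X < dim S" "\<not> d dvd dim X" for X
  proof -
    have "\<exists>v\<in>X. v \<noteq> 0 \<and> (\<exists>a. f v = scale a v) \<and> (\<exists>b. g v = scale b v)"
      by (rule less.hyps[OF X(5,1)]) (use X S(2,6) in auto)
    then show ?case using X(2) by blast
  qed
  show ?case
  proof (cases "\<forall>x\<in>S. h x = 0")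
    case True
    obtain v b where "v \<in> S" "v \<noteq> 0" "g v = scale b v"
      using eigenvector_if_has_eigenvalues[OF S(1) fin S(2) g S(5) ev[OF S(3)]] by blast
    moreover have "f v = scale l v" using True \<open>v \<in> S\<close> by (simp add: h_def)
    ultimately show ?thesis by blast
  next
    case False
    interpret h: Vector_Spaces.linear scale scale h by fact
    have "?W = S \<inter> {x. h x = 0}" by auto
    then have subW: "subspace ?W" using subspace_inter[OF S(1) h.subspace_kernel] by simp
    have subU: "subspace ?U" using h.subspace_image[OF S(1)] .
    obtain x where x: "x \<in> S" "h x \<noteq> 0" using False by blast
    have "h v0 = 0" using v0(3) by (simp add: h_def)
    note kernel_or_image_not_dvd_dim[OF h S(1) inv(5) S(3) fin S(2) v0(1,2) this x]
    then show ?thesis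
    proof (elim disjE conjE)
      assume "dim ?W < dim S" "\<not> d dvd dim ?W"
      then show ?thesis using from_smaller[OF subW _ inv(1,2)] by blast
    next
      assume "dim ?U < dim S" "\<not> d dvd dim ?U"
      then show ?thesis using from_smaller[OF subU inv(5,3,4)] by blast
    qed
  qed
qed

end

definition fscale :: "'k::field \<Rightarrow> ('i \<Rightarrow> 'k) \<Rightarrow> ('i \<Rightarrow> 'k)" where
  "fscale c x = (\<lambda>i. c * x i)"

interpretation fun_vs: vector_space "fscale :: 'k::field \<Rightarrow> ('i \<Rightarrow> 'k) \<Rightarrow> ('i \<Rightarrow> 'k)"
  by unfold_locales (auto simp: fscale_def algebra_simps)

lemma fscale_apply [simp]: "fscale c x i = c * x i"
  by (simp add: fscale_def)

lemma sum_fun_apply: "(\<Sum>a\<in>A. f a) x = (\<Sum>a\<in>A. f a x)"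
  by (induct A rule: infinite_finite_induct) auto

definition funs_on :: "'i set \<Rightarrow> ('i \<Rightarrow> 'k::zero) set" where
  "funs_on I = {x. \<forall>i. i \<notin> I \<longrightarrow> x i = 0}"

definition unit_fun :: "'i \<Rightarrow> 'i \<Rightarrow> 'k::{zero,one}" where
  "unit_fun i = (\<lambda>j. if j = i then 1 else 0)"

lemma subspace_funs_on: "fun_vs.subspace (funs_on I :: ('i \<Rightarrow> 'k::field) set)"
  unfolding fun_vs.subspace_def funs_on_def by auto

lemma funs_on_eq_sum_unit_fun:
  fixes x :: "'i \<Rightarrow> 'k::field"
  assumes "finite I" "x \<in> funs_on I"
  shows "x = (\<Sum>i\<in>I. fscale (x i) (unit_fun i))"
proof
  fix j
  show "x j = (\<Sum>i\<in>I. fscale (x i) (unit_fun i)) j"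
  proof (cases "j \<in> I")
    case True
    have "(\<Sum>i\<in>I. fscale (x i) (unit_fun i)) j = x j * unit_fun j j + (\<Sum>i\<in>I - {j}. x i * unit_fun i j)"
      unfolding sum_fun_apply fscale_apply by (rule sum.remove[OF assms(1) True])
    also have "(\<Sum>i\<in>I - {j}. x i * unit_fun i j) = 0"
      by (rule sum.neutral) (auto simp: unit_fun_def)
    finally show ?thesis by (simp add: unit_fun_def fscale_def)
  next
    case False
    then show ?thesis
      using assms(2) by (auto simp: sum_fun_apply unit_fun_def funs_on_def intro!: sum.neutral)
  qed
qed

lemma funs_on_subset_span:
  assumes "finite I"
  shows "(funs_on I :: ('i \<Rightarrow> 'k::field) set) \<subseteq> fun_vs.span (unit_fun ` I)"
proof
  fix x :: "'i \<Rightarrow> 'k" assume x: "x \<in> funs_on I"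
  show "x \<in> fun_vs.span (unit_fun ` I)"
    by (subst funs_on_eq_sum_unit_fun[OF assms x])
      (intro fun_vs.span_sum fun_vs.span_scale fun_vs.span_base imageI)
qed

lemma inj_unit_fun: "inj (unit_fun :: 'i \<Rightarrow> 'i \<Rightarrow> 'k::zero_neq_one)"
proof
  fix i j :: 'i assume "unit_fun i = (unit_fun j :: 'i \<Rightarrow> 'k)"
  then have "unit_fun i i = (unit_fun j i :: 'k)" by simp
  then show "i = j" by (auto simp: unit_fun_def split: if_splits)
qed

lemma independent_unit_funs: "fun_vs.independent (unit_fun ` I :: ('i \<Rightarrow> 'k::field) set)"
  unfolding fun_vs.independent_explicit_module
proof (intro allI impI)
  fix t u v
  assume t: "finite t" "t \<subseteq> unit_fun ` I"
    and s: "(\<Sum>v\<in>t. fscale (u v) v) = (0 :: 'i \<Rightarrow> 'k)" and v: "v \<in> t"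
  obtain i where i: "v = unit_fun i" using t v by auto
  have "0 = (\<Sum>w\<in>t. fscale (u w) w) i" using s by simp
  also have "\<dots> = (\<Sum>w\<in>t. u w * w i)" by (simp add: sum_fun_apply)
  also have "\<dots> = u v * v i + (\<Sum>w\<in>t - {v}. u w * w i)"
    by (rule sum.remove[OF t(1) v])
  also have "(\<Sum>w\<in>t - {v}. u w * w i) = 0"
  proof (rule sum.neutral, rule ballI)
    fix w assume "w \<in> t - {v}"
    then obtain k where "w = unit_fun k" "k \<noteq> i" using t i by auto
    then show "u w * w i = 0" by (simp add: unit_fun_def)
  qed
  finally show "u v = 0" using i by (simp add: unit_fun_def)
qed

lemma dim_funs_on:
  assumes "finite I"
  shows "fun_vs.dim (funs_on I :: ('i \<Rightarrow> 'k::field) set) = card I"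
proof (rule fun_vs.dim_unique)
  show "unit_fun ` I \<subseteq> (funs_on I :: ('i \<Rightarrow> 'k) set)" by (auto simp: funs_on_def unit_fun_def)
  show "card (unit_fun ` I :: ('i \<Rightarrow> 'k) set) = card I"
    by (rule card_image) (rule inj_on_subset[OF inj_unit_fun], simp)
qed (simp_all add: funs_on_subset_span[OF assms] independent_unit_funs)

lemma common_eigenvector_in_coords:
  fixes dec :: "('i \<Rightarrow> 'k::field) \<Rightarrow> 'm::ab_group_add" and enc :: "'m \<Rightarrow> 'i \<Rightarrow> 'k"
    and s :: "'k \<Rightarrow> 'm \<Rightarrow> 'm"
  assumes I: "finite I" "\<not> d dvd card I" and ev: "\<And>m. \<not> d dvd m \<Longrightarrow> has_eigenvalues TYPE('k) m"
    and C: "\<And>x. dec x \<in> C" "\<And>X. X \<in> C \<Longrightarrow> P X \<in> C" "\<And>X. X \<in> C \<Longrightarrow> Q X \<in> C"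
    and enc: "\<And>X. enc X \<in> funs_on I" "\<And>X. X \<in> C \<Longrightarrow> dec (enc X) = X"
    and lin: "\<And>x y. dec (x + y) = dec x + dec y" "\<And>c x. dec (fscale c x) = s c (dec x)"
      "\<And>X Y. enc (X + Y) = enc X + enc Y" "\<And>c X. enc (s c X) = fscale c (enc X)"
      "\<And>X Y. P (X + Y) = P X + P Y" "\<And>c X. P (s c X) = s c (P X)"
      "\<And>X Y. Q (X + Y) = Q X + Q Y" "\<And>c X. Q (s c X) = s c (Q X)"
    and PQ: "\<And>X. P (Q X) = Q (P X)"
  shows "\<exists>x\<in>funs_on I. x \<noteq> 0 \<and> (\<exists>a. P (dec x) = s a (dec x)) \<and> (\<exists>b. Q (dec x) = s b (dec x))"
proof -
  have L: "Vector_Spaces.linear fscale fscale (\<lambda>x. enc (R (dec x)))"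
    if "\<And>X Y. R (X + Y) = R X + R Y" "\<And>c X. R (s c X) = s c (R X)" for R
    unfolding Vector_Spaces.linear_iff by (simp add: fun_vs.vector_space_axioms lin that)
  have "\<exists>x\<in>funs_on I. x \<noteq> 0 \<and> (\<exists>a. enc (P (dec x)) = fscale a x) \<and> (\<exists>b. enc (Q (dec x)) = fscale b x)"
  proof (rule fun_vs.common_eigenvector_of_commuting[OF _ ev L[OF lin(5,6)] L[OF lin(7,8)]])
    show "funs_on I \<subseteq> fun_vs.span (unit_fun ` I)" by (rule funs_on_subset_span[OF I(1)])
    show "\<forall>x\<in>funs_on I. enc (P (dec (enc (Q (dec x))))) = enc (Q (dec (enc (P (dec x)))))"
      using C enc(2) PQ by simp
  qed (use I enc(1) in \<open>auto simp: subspace_funs_on dim_funs_on\<close>)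
  moreover have "R (dec x) = s a (dec x)" if "enc (R (dec x)) = fscale a x" "\<And>X. X \<in> C \<Longrightarrow> R X \<in> C"
    for R x a
  proof -
    have "R (dec x) = dec (enc (R (dec x)))" using C(1) enc(2) that(2) by simp
    then show ?thesis using that(1) lin(2) by simp
  qed
  ultimately show ?thesis using C(2,3) by blast
qed

definition mmult :: "nat \<Rightarrow> (nat \<times> nat \<Rightarrow> 'k::comm_ring_1) \<Rightarrow> (nat \<times> nat \<Rightarrow> 'k) \<Rightarrow> (nat \<times> nat \<Rightarrow> 'k)" where
  "mmult n X Y = (\<lambda>(i, j). \<Sum>k<n. X (i, k) * Y (k, j))"

lemma mmult_add_right: "mmult n X (Y + Z) = mmult n X Y + mmult n X Z"
  and mmult_add_left: "mmult n (X + Y) Z = mmult n X Z + mmult n Y Z"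
  and mmult_diff_right: "mmult n X (Y - Z) = mmult n X Y - mmult n X Z"
  and mmult_diff_left: "mmult n (X - Y) Z = mmult n X Z - mmult n Y Z"
  and mmult_fscale_left: "mmult n (fscale c X) Y = fscale c (mmult n X Y)"
  and mmult_fscale_right: "mmult n X (fscale c Y) = fscale c (mmult n X Y)"
  by (auto simp: mmult_def sum.distrib sum_subtractf sum_distrib_left algebra_simps)

lemma mmult_assoc: "mmult n (mmult n X Y) Z = mmult n X (mmult n Y Z)"
proof -
  have "(\<Sum>k<n. (\<Sum>l<n. X (i, l) * Y (l, k)) * Z (k, j)) = (\<Sum>l<n. X (i, l) * (\<Sum>k<n. Y (l, k) * Z (k, j)))"
    for i j
    by (simp add: sum_distrib_left sum_distrib_right mult.assoc) (rule sum.swap)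
  then show ?thesis by (auto simp: mmult_def)
qed

lemmas mmult_simps = mmult_add_right mmult_add_left mmult_diff_right mmult_diff_left
  mmult_fscale_left mmult_fscale_right mmult_assoc
  fun_vs.scale_right_distrib fun_vs.scale_right_diff_distrib

definition mtrans :: "(nat \<times> nat \<Rightarrow> 'k) \<Rightarrow> (nat \<times> nat \<Rightarrow> 'k)" where
  "mtrans X = (\<lambda>(i, j). X (j, i))"

lemma mtrans_mmult: "mtrans (mmult n X Y) = mmult n (mtrans Y) (mtrans X)"
  by (auto simp: mmult_def mtrans_def mult.commute)

lemma mtrans_add: "mtrans (X + Y) = mtrans X + mtrans Y"
  by (auto simp: mtrans_def)

lemma mtrans_mtrans [simp]: "mtrans (mtrans X) = X"
  by (auto simp: mtrans_def)

definition madj :: "(nat \<times> nat \<Rightarrow> 'k::comm_ring_1 cpx) \<Rightarrow> (nat \<times> nat \<Rightarrow> 'k cpx)" where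
  "madj X = (\<lambda>(i, j). cnj (X (j, i)))"

lemma madj_mmult: "madj (mmult n X Y) = mmult n (madj Y) (madj X)"
  by (auto simp: mmult_def madj_def cnj.hom_sum mult.commute)

lemma madj_madj [simp]: "madj (madj X) = X"
  and madj_add: "madj (X + Y) = madj X + madj Y"
  and madj_diff: "madj (X - Y) = madj X - madj Y"
  and madj_fscale: "madj (fscale c X) = fscale (cnj c) (madj X)"
  by (auto simp: madj_def fscale_def)

definition square_on :: "nat \<Rightarrow> (nat \<times> nat \<Rightarrow> 'k::zero) \<Rightarrow> bool" where
  "square_on n X \<longleftrightarrow> (\<forall>i j. \<not> (i < n \<and> j < n) \<longrightarrow> X (i, j) = 0)"

lemma square_on_mmult: "square_on n X \<Longrightarrow> square_on n Y \<Longrightarrow> square_on n (mmult n X Y)"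
  by (auto simp: square_on_def mmult_def intro!: sum.neutral)

lemma square_on_add: "square_on n (X :: nat \<times> nat \<Rightarrow> 'k::ab_group_add) \<Longrightarrow> square_on n Y \<Longrightarrow> square_on n (X + Y)"
  by (auto simp: square_on_def)

lemma square_on_diff: "square_on n (X :: nat \<times> nat \<Rightarrow> 'k::ab_group_add) \<Longrightarrow> square_on n Y \<Longrightarrow> square_on n (X - Y)"
  by (auto simp: square_on_def)

lemma square_on_fscale: "square_on n X \<Longrightarrow> square_on n (fscale c X)"
  by (auto simp: square_on_def)

lemma square_on_mtrans: "square_on n X \<Longrightarrow> square_on n (mtrans X)"
  by (auto simp: square_on_def mtrans_def)

lemma square_on_madj: "square_on n X \<Longrightarrow> square_on n (madj X)"
  by (auto simp: square_on_def madj_def)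

definition fun_of_mat :: "nat \<Rightarrow> 'k::zero mat \<Rightarrow> (nat \<times> nat \<Rightarrow> 'k)" where
  "fun_of_mat n A = (\<lambda>(i, j). if i < n \<and> j < n then A $$ (i, j) else 0)"

lemma square_on_fun_of_mat: "square_on n (fun_of_mat n A)"
  by (auto simp: square_on_def fun_of_mat_def)

lemma eigenvalue_if_mmult_eq_fscale:
  fixes A :: "'k::field mat"
  assumes A: "A \<in> carrier_mat n n" and X: "square_on n X" "X \<noteq> 0"
    and eq: "mmult n (fun_of_mat n A) X = fscale l X"
  shows "eigenvalue A l"
proof -
  obtain i j where ij: "X (i, j) \<noteq> 0" using X(2) by (metis ext surj_pair zero_fun_def)
  then have ij': "i < n" "j < n" using X(1) by (auto simp: square_on_def)
  define v where "v = vec n (\<lambda>k. X (k, j))"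
  have v: "v \<in> carrier_vec n" unfolding v_def by simp
  have "v \<noteq> 0\<^sub>v n" using ij ij' unfolding v_def by (metis index_vec index_zero_vec(1))
  moreover have "A *\<^sub>v v = l \<cdot>\<^sub>v v"
  proof (rule eq_vecI)
    fix k assume k: "k < dim_vec (l \<cdot>\<^sub>v v)"
    then have k': "k < n" using v by simp
    have "(A *\<^sub>v v) $ k = (\<Sum>m<n. A $$ (k, m) * X (m, j))"
      using A k' by (auto simp: scalar_prod_def v_def lessThan_atLeast0)
    also have "\<dots> = mmult n (fun_of_mat n A) X (k, j)"
      using k' by (auto simp: mmult_def fun_of_mat_def intro!: sum.cong)
    also have "\<dots> = l * X (k, j)" using eq by simp
    finally show "(A *\<^sub>v v) $ k = (l \<cdot>\<^sub>v v) $ k" using k' by (simp add: v_def)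
  qed (use A v in simp)
  ultimately show ?thesis unfolding eigenvalue_def eigenvector_def using A v by auto
qed

section \<open>Eigenvalues over a real closed field and its complexification\<close>

lemma odd_degree_poly_has_root:
  fixes p :: "'a::real_closed_field poly"
  assumes "odd (degree p)"
  shows "\<exists>x. poly p x = 0"
proof -
  have "coeff p (degree p) \<noteq> 0" using odd_pos[OF assms] by auto
  then obtain x where "(\<Sum>i\<le>degree p. coeff p i * x ^ i) = 0"
    using odd_degree_root[OF assms] by blast
  then show ?thesis by (auto simp: poly_altdef)
qed

lemma has_eigenvalues_odd:
  assumes "odd n"
  shows "has_eigenvalues TYPE('a::real_closed_field) n"
  unfolding has_eigenvalues_def
proof (intro allI impI)
  fix A :: "'a mat" assume A: "A \<in> carrier_mat n n"
  have "degree (char_poly A) = n" using degree_monic_char_poly[OF A] by simp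
  then obtain x where "poly (char_poly A) x = 0" using odd_degree_poly_has_root assms by metis
  then show "\<exists>l. eigenvalue A l" using eigenvalue_root_char_poly[OF A] by blast
qed

abbreviation square_index :: "nat \<Rightarrow> (nat \<times> nat) set" where
  "square_index n \<equiv> {..<n} \<times> {..<n}"

text \<open>Real coordinates of a hermitian matrix: the upper triangle holds real parts, the strict
  lower triangle imaginary parts.\<close>

definition herm_of :: "nat \<Rightarrow> (nat \<times> nat \<Rightarrow> 'a::linordered_field) \<Rightarrow> (nat \<times> nat \<Rightarrow> 'a cpx)" where
  "herm_of n x = (\<lambda>(i, j). if i < n \<and> j < n then
     (if i = j then ofR (x (i, i)) else if i < j then Cpx (x (i, j)) (x (j, i)) else Cpx (x (j, i)) (- x (i, j)))
     else 0)"

definition herm_coords :: "nat \<Rightarrow> (nat \<times> nat \<Rightarrow> 'a::linordered_field cpx) \<Rightarrow> (nat \<times> nat \<Rightarrow> 'a)" where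
  "herm_coords n X = (\<lambda>(i, j). if i < n \<and> j < n then (if i \<le> j then cre (X (i, j)) else cim (X (j, i))) else 0)"

definition is_herm :: "nat \<Rightarrow> (nat \<times> nat \<Rightarrow> 'a::linordered_field cpx) \<Rightarrow> bool" where
  "is_herm n X \<longleftrightarrow> square_on n X \<and> madj X = X"

lemma is_herm_herm_of: "is_herm n (herm_of n x)"
  unfolding is_herm_def square_on_def
  by (auto simp: herm_of_def madj_def cpx_eq_iff fun_eq_iff)

lemma herm_of_herm_coords:
  assumes "is_herm n X"
  shows "herm_of n (herm_coords n X) = X"
proof
  fix p :: "nat \<times> nat"
  obtain i j where p: "p = (i, j)" by (cases p)
  have s: "square_on n X" and a: "\<And>i j. cnj (X (j, i)) = X (i, j)"
    using assms unfolding is_herm_def by (auto simp: fun_eq_iff madj_def)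
  have "cim (X (i, i)) = 0" using a[of i i] by (simp add: cpx_eq_iff)
  then show "herm_of n (herm_coords n X) p = X p"
    unfolding p using a[of i j] s
    by (auto simp: herm_of_def herm_coords_def cpx_eq_iff square_on_def)
qed

lemma herm_coords_herm_of:
  assumes "x \<in> funs_on (square_index n)"
  shows "herm_coords n (herm_of n x) = x"
proof
  fix p :: "nat \<times> nat"
  show "herm_coords n (herm_of n x) p = x p"
    using assms by (cases p) (auto simp: herm_of_def herm_coords_def funs_on_def)
qed

lemma herm_coords_in_funs_on: "herm_coords n X \<in> funs_on (square_index n)"
  by (auto simp: herm_coords_def funs_on_def)

lemma herm_of_add: "herm_of n (x + y) = herm_of n x + herm_of n y"
  and herm_of_fscale: "herm_of n (fscale c x) = fscale (ofR c) (herm_of n x)"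
  and herm_coords_add: "herm_coords n (X + Y) = herm_coords n X + herm_coords n Y"
  and herm_coords_fscale: "herm_coords n (fscale (ofR c) X) = fscale c (herm_coords n X)"
  by (auto simp: herm_of_def herm_coords_def fun_eq_iff cpx_eq_iff)

lemma is_herm_fscale_mmult_madj:
  assumes X: "is_herm n X" and a: "square_on n a"
  shows "cnj c = c \<Longrightarrow> is_herm n (fscale c (mmult n a X + mmult n X (madj a)))"
    and "cnj c = - c \<Longrightarrow> is_herm n (fscale c (mmult n a X - mmult n X (madj a)))"
proof -
  have sq: "square_on n X" "square_on n (madj a)" and adj: "madj X = X"
    using X a by (auto simp: is_herm_def square_on_madj)
  show "is_herm n (fscale c (mmult n a X + mmult n X (madj a)))" if "cnj c = c"
    unfolding is_herm_def madj_fscale madj_add madj_mmult adj madj_madj that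
    by (auto simp: add.commute intro!: square_on_fscale square_on_add square_on_mmult sq a)
  show "is_herm n (fscale c (mmult n a X - mmult n X (madj a)))" if "cnj c = - c"
    unfolding is_herm_def madj_fscale madj_diff madj_mmult adj madj_madj that
    by (auto simp: fun_eq_iff algebra_simps intro!: square_on_fscale square_on_diff square_on_mmult sq a)
qed

text \<open>For odd \<open>n\<close> the real space of hermitian \<open>n \<times> n\<close> matrices has odd dimension \<open>n\<^sup>2\<close>, and
  \<open>X \<mapsto> (A X + X A\<^sup>*) / 2\<close> and \<open>X \<mapsto> (A X - X A\<^sup>*) / 2i\<close> are commuting operators on it.
  A common eigenvector \<open>X\<close> satisfies \<open>A X = (\<alpha> + i \<beta>) X\<close>.\<close>

lemma has_eigenvalues_cpx_odd:
  assumes "odd n"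
  shows "has_eigenvalues TYPE('a::real_closed_field cpx) n"
  unfolding has_eigenvalues_def
proof (intro allI impI)
  fix A :: "'a cpx mat" assume A: "A \<in> carrier_mat n n"
  define a where "a = fun_of_mat n A"
  define c1 :: "'a cpx" where "c1 = ofR (1 / 2)"
  define c2 :: "'a cpx" where "c2 = - ii * ofR (1 / 2)"
  define P where "P X = fscale c1 (mmult n a X + mmult n X (madj a))" for X
  define Q where "Q X = fscale c2 (mmult n a X - mmult n X (madj a))" for X
  have P_lin: "P (X + Y) = P X + P Y" "P (fscale c X) = fscale c (P X)"
    and Q_lin: "Q (X + Y) = Q X + Q Y" "Q (fscale c X) = fscale c (Q X)" for X Y c
    unfolding P_def Q_def by (simp_all add: mmult_simps fun_vs.scale_scale mult.commute algebra_simps)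
  obtain x al be where x: "x \<in> funs_on (square_index n)" "x \<noteq> 0"
    and eig: "P (herm_of n x) = fscale (ofR al) (herm_of n x)" "Q (herm_of n x) = fscale (ofR be) (herm_of n x)"
  proof -
    have "\<exists>x\<in>funs_on (square_index n). x \<noteq> 0
        \<and> (\<exists>al. P (herm_of n x) = fscale (ofR al) (herm_of n x))
        \<and> (\<exists>be. Q (herm_of n x) = fscale (ofR be) (herm_of n x))"
    proof (rule common_eigenvector_in_coords[where C = "{X. is_herm n X}" and enc = "herm_coords n"
          and s = "\<lambda>c. fscale (ofR c)"])
      show "\<And>m. \<not> 2 dvd m \<Longrightarrow> has_eigenvalues TYPE('a) m" by (simp add: has_eigenvalues_odd)
      show "\<not> 2 dvd card (square_index n)" using assms by (simp add: card_cartesian_product)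
      show "P (Q X) = Q (P X)" for X
        unfolding P_def Q_def by (simp add: mmult_simps fun_vs.scale_scale mult.commute algebra_simps)
      show "P X \<in> {X. is_herm n X}" if "X \<in> {X. is_herm n X}" for X
        using is_herm_fscale_mmult_madj(1)[of n X a c1] that
        by (simp add: P_def a_def square_on_fun_of_mat c1_def)
      show "Q X \<in> {X. is_herm n X}" if "X \<in> {X. is_herm n X}" for X
        using is_herm_fscale_mmult_madj(2)[of n X a c2] that
        by (simp add: Q_def a_def square_on_fun_of_mat c2_def cpx_eq_iff)
    qed (simp_all only: mem_Collect_eq is_herm_herm_of herm_coords_in_funs_on herm_of_herm_coords
        P_lin Q_lin herm_of_add herm_of_fscale herm_coords_add herm_coords_fscale, simp)
    then show ?thesis using that by blast
  qed
  define X where "X = herm_of n x"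
  have "herm_coords n 0 = (0 :: nat \<times> nat \<Rightarrow> 'a)" by (auto simp: herm_coords_def)
  then have "X \<noteq> 0" using herm_coords_herm_of[OF x(1)] x(2) unfolding X_def by metis
  have "c1 + ii * c2 = 1" "c1 - ii * c2 = 0" by (simp_all add: c1_def c2_def cpx_eq_iff)
  moreover have "P X + fscale ii (Q X)
      = fscale (c1 + ii * c2) (mmult n a X) + fscale (c1 - ii * c2) (mmult n X (madj a))"
    unfolding P_def Q_def by (simp add: fun_eq_iff algebra_simps)
  ultimately have "mmult n a X = P X + fscale ii (Q X)" by (simp add: fun_eq_iff)
  also have "\<dots> = fscale (ofR al + ii * ofR be) X"
    using eig unfolding X_def by (simp add: fun_eq_iff algebra_simps)
  finally show "\<exists>l. eigenvalue A l"
    using eigenvalue_if_mmult_eq_fscale[OF A _ \<open>X \<noteq> 0\<close>] is_herm_herm_of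
    unfolding a_def X_def is_herm_def by blast
qed

lemma nonneg_sqrt_exists:
  fixes x :: "'a::real_closed_field"
  assumes "0 \<le> x" shows "\<exists>y\<ge>0. y * y = x"
proof -
  obtain y where "y * y = x" using nonneg_is_square[OF assms] by blast
  then show ?thesis by (intro exI[of _ "\<bar>y\<bar>"]) (auto simp: abs_mult_self_eq)
qed

lemma cpx_sqrt_exists:
  fixes w :: "'a::real_closed_field cpx"
  shows "\<exists>z. z * z = w"
proof -
  define a where "a = cre w"
  define b where "b = cim w"
  obtain r where r: "r \<ge> 0" "r * r = a * a + b * b"
    using nonneg_sqrt_exists[of "a * a + b * b"] by auto
  have "\<bar>a\<bar> \<le> r"
  proof (rule ccontr)
    assume "\<not> \<bar>a\<bar> \<le> r"
    then have "r * r < \<bar>a\<bar> * \<bar>a\<bar>" using mult_strict_mono[of r "\<bar>a\<bar>" r "\<bar>a\<bar>"] r(1) by simp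
    then show False using r(2) by (simp add: abs_mult_self_eq add_increasing2)
  qed
  then have "0 \<le> (r + a) / 2" "0 \<le> (r - a) / 2" by auto
  then obtain u v0 where u: "u \<ge> 0" "u * u = (r + a) / 2" and v0: "v0 \<ge> 0" "v0 * v0 = (r - a) / 2"
    using nonneg_sqrt_exists by meson
  define v where "v = (if b \<ge> 0 then v0 else - v0)"
  have "(2 * u * v0) * (2 * u * v0) = (2 * (u * u)) * (2 * (v0 * v0))" by (simp add: algebra_simps)
  also have "\<dots> = (r + a) * (r - a)"
  proof -
    have "2 * (u * u) = r + a" "2 * (v0 * v0) = r - a" using u(2) v0(2) by simp_all
    then show ?thesis by (simp only:)
  qed
  also have "\<dots> = b * b" using r(2) by (simp add: algebra_simps)
  finally have "2 * u * v0 = \<bar>b\<bar> \<or> 2 * u * v0 = - \<bar>b\<bar>"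
    using square_eq_iff[of "2 * u * v0" "\<bar>b\<bar>"] by (simp add: abs_mult_self_eq)
  moreover have "0 \<le> 2 * u * v0" using u(1) v0(1) by simp
  ultimately have "2 * u * v0 = \<bar>b\<bar>" using abs_ge_zero[of b] by linarith
  then have "u * v + v * u = b" by (auto simp: v_def algebra_simps)
  moreover have "u * u - v * v = a" using u v0 by (simp add: v_def field_simps)
  ultimately show ?thesis
    by (intro exI[of _ "Cpx u v"]) (simp add: cpx_eq_iff a_def b_def)
qed

lemma cpx_quadratic_splits:
  fixes s p :: "'a::real_closed_field cpx"
  shows "\<exists>m1 m2. m1 + m2 = s \<and> m1 * m2 = p"
proof -
  obtain d where d: "d * d = s * s - 4 * p" using cpx_sqrt_exists by blast
  have two: "(2 :: 'a cpx) \<noteq> 0" "(4 :: 'a cpx) \<noteq> 0" by (simp_all add: cpx_eq_iff)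
  show ?thesis
  proof (intro exI conjI)
    show "(s + d) / 2 + (s - d) / 2 = s" using two by (simp add: field_simps)
    show "(s + d) / 2 * ((s - d) / 2) = p" using two d by (simp add: field_simps)
  qed
qed

definition sym_index :: "nat \<Rightarrow> (nat \<times> nat) set" where
  "sym_index n = {(i, j). i \<le> j \<and> j < n}"

lemma finite_sym_index: "finite (sym_index n)"
  by (rule finite_subset[of _ "{..<n} \<times> {..<n}"]) (auto simp: sym_index_def)

lemma card_sym_index: "2 * card (sym_index n) = n * (n + 1)"
proof (induct n)
  case 0
  then show ?case by (simp add: sym_index_def)
next
  case (Suc n)
  have "sym_index (Suc n) = sym_index n \<union> (\<lambda>i. (i, n)) ` {..n}"
    and "sym_index n \<inter> (\<lambda>i. (i, n)) ` {..n} = {}" by (auto simp: sym_index_def)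
  then have "card (sym_index (Suc n)) = card (sym_index n) + card ((\<lambda>i. (i, n)) ` {..n})"
    using finite_sym_index by (simp add: card_Un_disjoint)
  also have "card ((\<lambda>i. (i, n)) ` {..n}) = Suc n"
    by (subst card_image) (auto simp: inj_on_def)
  finally show ?case using Suc by simp
qed

lemma not_dvd_card_sym_index:
  assumes k: "k \<ge> 1" and d: "2 ^ k dvd n" and nd: "\<not> 2 ^ Suc k dvd n"
  shows "\<not> 2 ^ k dvd card (sym_index n)"
proof
  assume "2 ^ k dvd card (sym_index n)"
  then have "2 ^ Suc k dvd n * (n + 1)" unfolding card_sym_index[symmetric] by simp
  moreover have "2 dvd n" using dvd_trans[OF dvd_power[of k 2] d] k by simp
  then have "coprime (2 ^ Suc k) (n + 1)" by simp
  ultimately show False using nd coprime_dvd_mult_left_iff by blast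
qed

definition sym_of :: "nat \<Rightarrow> (nat \<times> nat \<Rightarrow> 'k::zero) \<Rightarrow> (nat \<times> nat \<Rightarrow> 'k)" where
  "sym_of n x = (\<lambda>(i, j). if i < n \<and> j < n then x (min i j, max i j) else 0)"

definition sym_coords :: "nat \<Rightarrow> (nat \<times> nat \<Rightarrow> 'k::zero) \<Rightarrow> (nat \<times> nat \<Rightarrow> 'k)" where
  "sym_coords n X = (\<lambda>(i, j). if i \<le> j \<and> j < n then X (i, j) else 0)"

definition is_sym :: "nat \<Rightarrow> (nat \<times> nat \<Rightarrow> 'k::zero) \<Rightarrow> bool" where
  "is_sym n X \<longleftrightarrow> square_on n X \<and> mtrans X = X"

lemma is_sym_sym_of: "is_sym n (sym_of n x)"
  by (auto simp: is_sym_def square_on_def sym_of_def mtrans_def fun_eq_iff min_def max_def)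

lemma sym_of_sym_coords:
  assumes "is_sym n X"
  shows "sym_of n (sym_coords n X) = X"
proof
  fix p :: "nat \<times> nat"
  have "square_on n X" "\<And>i j. X (j, i) = X (i, j)"
    using assms by (auto simp: is_sym_def fun_eq_iff mtrans_def)
  then show "sym_of n (sym_coords n X) p = X p"
    by (cases p) (auto simp: sym_of_def sym_coords_def square_on_def min_def max_def)
qed

lemma sym_coords_sym_of:
  assumes "x \<in> funs_on (sym_index n)"
  shows "sym_coords n (sym_of n x) = x"
proof
  fix p :: "nat \<times> nat"
  show "sym_coords n (sym_of n x) p = x p"
    using assms by (cases p) (auto simp: sym_of_def sym_coords_def funs_on_def sym_index_def)
qed

lemma sym_coords_in_funs_on: "sym_coords n X \<in> funs_on (sym_index n)"
  by (auto simp: sym_coords_def funs_on_def sym_index_def)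

lemma sym_of_add: "sym_of n (x + y) = sym_of n x + sym_of n (y :: nat \<times> nat \<Rightarrow> 'k::field)"
  and sym_of_fscale: "sym_of n (fscale c x) = fscale c (sym_of n x)"
  and sym_coords_add: "sym_coords n (X + Y) = sym_coords n X + sym_coords n (Y :: nat \<times> nat \<Rightarrow> 'k::field)"
  and sym_coords_fscale: "sym_coords n (fscale c X) = fscale c (sym_coords n X)"
  by (auto simp: sym_of_def sym_coords_def fun_eq_iff)

text \<open>If \<open>A X + X A\<^sup>T = (m\<^sub>1 + m\<^sub>2) X\<close> and \<open>A X A\<^sup>T = m\<^sub>1 m\<^sub>2 X\<close>, then
  \<open>(A - m\<^sub>1) (A - m\<^sub>2) X = 0\<close>.\<close>

lemma eigenvalue_if_sym_eigenpair:
  fixes A :: "'k::field mat" and n :: nat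
  defines "a \<equiv> fun_of_mat n A"
  assumes A: "A \<in> carrier_mat n n" and X: "square_on n X" "X \<noteq> 0"
    and sum: "mmult n a X + mmult n X (mtrans a) = fscale (m1 + m2) X"
    and prod: "mmult n a (mmult n X (mtrans a)) = fscale (m1 * m2) X"
  shows "eigenvalue A m1 \<or> eigenvalue A m2"
proof -
  define Y where "Y = mmult n a X"
  define C where "C = Y - fscale m2 X"
  have "mmult n a Y = fscale (m1 + m2) Y - fscale (m1 * m2) X"
  proof -
    have "Y = fscale (m1 + m2) X - mmult n X (mtrans a)" using sum by (simp add: Y_def algebra_simps)
    then show ?thesis using prod by (simp add: mmult_simps Y_def)
  qed
  then have "mmult n a C = fscale m1 C"
    by (simp add: C_def mmult_simps Y_def[symmetric] fun_eq_iff algebra_simps)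
  moreover have "square_on n C"
    unfolding C_def Y_def a_def by (intro square_on_diff square_on_mmult square_on_fscale square_on_fun_of_mat X)
  moreover have "C = 0 \<Longrightarrow> mmult n a X = fscale m2 X" by (simp add: C_def Y_def)
  ultimately show ?thesis
    using eigenvalue_if_mmult_eq_fscale[OF A] X unfolding a_def by blast
qed

lemma is_sym_mmult_mtrans:
  assumes X: "is_sym n X" and a: "square_on n a"
  shows "is_sym n (mmult n a X + mmult n X (mtrans a))" and "is_sym n (mmult n (mmult n a X) (mtrans a))"
proof -
  have sq: "square_on n X" "square_on n (mtrans a)" and tr: "mtrans X = X"
    using X a by (auto simp: is_sym_def square_on_mtrans)
  show "is_sym n (mmult n a X + mmult n X (mtrans a))"
    unfolding is_sym_def mtrans_add mtrans_mmult tr mtrans_mtrans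
    by (auto simp: add.commute intro!: square_on_add square_on_mmult sq a)
  show "is_sym n (mmult n (mmult n a X) (mtrans a))"
    unfolding is_sym_def mtrans_mmult tr mtrans_mtrans
    by (auto simp: mmult_assoc intro!: square_on_mmult sq a)
qed

text \<open>Induction step on the \<open>2\<close>-adic valuation of \<open>n\<close>: the complex space of symmetric
  \<open>n \<times> n\<close> matrices has dimension \<open>n (n + 1) / 2\<close>, whose valuation is smaller, and
  \<open>X \<mapsto> A X + X A\<^sup>T\<close> and \<open>X \<mapsto> A X A\<^sup>T\<close> are commuting operators on it.\<close>

lemma has_eigenvalues_cpx_step:
  assumes k: "k \<ge> 1" "2 ^ k dvd n" "\<not> 2 ^ Suc k dvd n"
    and IH: "\<And>m. \<not> 2 ^ k dvd m \<Longrightarrow> has_eigenvalues TYPE('a::real_closed_field cpx) m"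
  shows "has_eigenvalues TYPE('a cpx) n"
  unfolding has_eigenvalues_def
proof (intro allI impI)
  fix A :: "'a cpx mat" assume A: "A \<in> carrier_mat n n"
  define a where "a = fun_of_mat n A"
  define P where "P X = mmult n a X + mmult n X (mtrans a)" for X
  define Q where "Q X = mmult n (mmult n a X) (mtrans a)" for X
  have P_lin: "P (X + Y) = P X + P Y" "P (fscale c X) = fscale c (P X)"
    and Q_lin: "Q (X + Y) = Q X + Q Y" "Q (fscale c X) = fscale c (Q X)" for X Y c
    unfolding P_def Q_def by (simp_all add: mmult_simps algebra_simps)
  obtain x al be where x: "x \<in> funs_on (sym_index n)" "x \<noteq> 0"
    and eig: "P (sym_of n x) = fscale al (sym_of n x)" "Q (sym_of n x) = fscale be (sym_of n x)"
  proof -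
    have "\<exists>x\<in>funs_on (sym_index n). x \<noteq> 0 \<and> (\<exists>al. P (sym_of n x) = fscale al (sym_of n x))
        \<and> (\<exists>be. Q (sym_of n x) = fscale be (sym_of n x))"
    proof (rule common_eigenvector_in_coords[where C = "{X. is_sym n X}" and enc = "sym_coords n"
          and d = "2 ^ k" and s = fscale])
      show "P (Q X) = Q (P X)" for X
        unfolding P_def Q_def by (simp add: mmult_simps algebra_simps)
      show "P X \<in> {X. is_sym n X}" "Q X \<in> {X. is_sym n X}" if "X \<in> {X. is_sym n X}" for X
        using is_sym_mmult_mtrans[of n X a] that square_on_fun_of_mat[of n A]
        by (simp_all add: P_def Q_def a_def)
    qed (simp_all only: mem_Collect_eq is_sym_sym_of sym_coords_in_funs_on sym_of_sym_coords
        finite_sym_index IH not_dvd_card_sym_index[OF k] P_lin Q_lin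
        sym_of_add sym_of_fscale sym_coords_add sym_coords_fscale not_False_eq_True)
    then show ?thesis using that by blast
  qed
  define X where "X = sym_of n x"
  have "sym_coords n 0 = (0 :: nat \<times> nat \<Rightarrow> 'a cpx)" by (auto simp: sym_coords_def)
  then have "X \<noteq> 0" using sym_coords_sym_of[OF x(1)] x(2) unfolding X_def by metis
  moreover obtain m1 m2 where "m1 + m2 = al" "m1 * m2 = be" using cpx_quadratic_splits by blast
  ultimately show "\<exists>l. eigenvalue A l"
    using eigenvalue_if_sym_eigenpair[OF A, of X m1 m2] eig is_sym_sym_of[of n x]
    unfolding X_def[symmetric] P_def Q_def a_def is_sym_def
    by (auto simp: mmult_assoc)
qed

lemma has_eigenvalues_cpx:
  assumes "n > 0"
  shows "has_eigenvalues TYPE('a::real_closed_field cpx) n"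
proof -
  have "\<not> 2 ^ k dvd m \<Longrightarrow> has_eigenvalues TYPE('a cpx) m" for k m
  proof (induction k arbitrary: m)
    case (Suc k)
    consider "\<not> 2 ^ k dvd m" | "k = 0" "odd m" | "k \<ge> 1" "2 ^ k dvd m"
      using Suc.prems by fastforce
    then show ?case
      by cases (use Suc has_eigenvalues_cpx_odd has_eigenvalues_cpx_step in blast)+
  qed simp
  moreover have "\<not> 2 ^ n dvd n"
    using assms less_exp[of n] dvd_imp_le[of "2 ^ n" n] by linarith
  ultimately show ?thesis by blast
qed

section \<open>Roots of polynomials\<close>

interpretation poly_vs: vector_space "smult :: 'k::field \<Rightarrow> 'k poly \<Rightarrow> 'k poly"
  by unfold_locales (auto simp: smult_add_right smult_add_left)

lemma subspace_degree_less: "n > 0 \<Longrightarrow> poly_vs.subspace {q :: 'k::field poly. degree q < n}"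
  unfolding poly_vs.subspace_def
  by (auto intro: le_less_trans[OF degree_add_le_max] le_less_trans[OF degree_smult_le])

lemma degree_less_subset_span_monom:
  "{q :: 'k::field poly. degree q < n} \<subseteq> poly_vs.span ((\<lambda>i. monom 1 i) ` {..<n})"
proof
  fix q :: "'k poly" assume q: "q \<in> {q. degree q < n}"
  have "q = (\<Sum>i\<le>degree q. smult (coeff q i) (monom 1 i))"
    by (simp add: smult_monom flip: poly_as_sum_of_monoms)
  also have "\<dots> \<in> poly_vs.span ((\<lambda>i. monom 1 i) ` {..<n})"
    using q by (intro poly_vs.span_sum poly_vs.span_scale poly_vs.span_base) auto
  finally show "q \<in> poly_vs.span ((\<lambda>i. monom 1 i) ` {..<n})" .
qed

text \<open>An eigenvector \<open>q\<close> of multiplication by \<open>X\<close> on \<open>K[X] / (p)\<close> yields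
  \<open>(X - \<lambda>) q = r p\<close>, and \<open>\<lambda>\<close> must then be a root of \<open>p\<close> since \<open>deg q < deg p\<close>.\<close>

lemma poly_eq_0_if_mult_X_mod_eigenvector:
  fixes p q :: "'k::field poly"
  assumes eig: "pCons 0 q mod p = smult l q" and q: "q \<noteq> 0" "degree q < degree p"
  shows "poly p l = 0"
proof (rule ccontr)
  assume "poly p l \<noteq> 0"
  define r where "r = pCons 0 q div p"
  have "pCons 0 q = r * p + smult l q"
    using eig div_mult_mod_eq[of "pCons 0 q" p] unfolding r_def by simp
  then have eq: "[:- l, 1:] * q = r * p" by (simp add: algebra_simps)
  have "poly r l = 0" using \<open>poly p l \<noteq> 0\<close> arg_cong[OF eq, of "\<lambda>x. poly x l"] by simp
  then obtain r' where "r = [:- l, 1:] * r'" using poly_eq_0_iff_dvd by (metis dvdE)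
  then have "[:- l, 1:] * q = [:- l, 1:] * (r' * p)" using eq by (simp only: mult.assoc)
  then have "q = r' * p" by (metis mult_left_cancel pCons_eq_0_iff one_neq_zero)
  then show False using q by (auto simp: degree_mult_eq)
qed

lemma poly_has_root_if_has_eigenvalues:
  fixes p :: "'k::field poly"
  assumes ev: "\<And>n. n > 0 \<Longrightarrow> has_eigenvalues TYPE('k) n" and deg: "degree p > 0"
  shows "\<exists>z. poly p z = 0"
proof -
  have "p \<noteq> 0" using deg by auto
  define S where "S = {q :: 'k poly. degree q < degree p}"
  define h where "h q = pCons 0 q mod p" for q
  have "pCons 0 (x + y) mod p = pCons 0 x mod p + pCons 0 y mod p" for x y
    using poly_mod_add_left[of "pCons 0 x" "pCons 0 y" p] by simp
  moreover have "pCons 0 (smult c x) mod p = smult c (pCons 0 x mod p)" for c x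
    using mod_smult_left[of c "pCons 0 x" p] by simp
  ultimately have lin: "Vector_Spaces.linear smult smult h"
    unfolding Vector_Spaces.linear_iff h_def by (auto simp: poly_vs.vector_space_axioms)
  have hS: "h ` S \<subseteq> S"
  proof
    fix y assume "y \<in> h ` S"
    then obtain q where "y = pCons 0 q mod p" by (auto simp: h_def)
    then show "y \<in> S"
      using degree_mod_less[OF \<open>p \<noteq> 0\<close>, of "pCons 0 q"] deg by (cases "y = 0") (auto simp: S_def)
  qed
  have sub: "poly_vs.subspace S" unfolding S_def by (rule subspace_degree_less[OF deg])
  have span: "S \<subseteq> poly_vs.span ((\<lambda>i. monom 1 i) ` {..<degree p})"
    unfolding S_def by (rule degree_less_subset_span_monom)
  have fin: "finite ((\<lambda>i. monom (1 :: 'k) i) ` {..<degree p})" by simp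
  have "1 \<in> S" using deg by (simp add: S_def)
  then have "poly_vs.dim S > 0" using poly_vs.dim_pos_if_nonzero[OF fin span] by simp
  then obtain q l where "q \<in> S" "q \<noteq> 0" "h q = smult l q"
    using poly_vs.eigenvector_if_has_eigenvalues[OF sub fin span lin hS ev] by blast
  then show ?thesis
    using poly_eq_0_if_mult_X_mod_eigenvector[of q p l] by (auto simp: S_def h_def)
qed

corollary cpx_poly_has_root:
  fixes p :: "'a::real_closed_field cpx poly"
  assumes "degree p > 0"
  shows "\<exists>z. poly p z = 0"
  using poly_has_root_if_has_eigenvalues[OF has_eigenvalues_cpx assms] .

lemma conj_quadratic_dvd_if_root:
  fixes p :: "'a::linordered_field poly"
  assumes z: "poly (map_poly ofR p) z = 0" and "cim z \<noteq> 0"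
  shows "[:cre z * cre z + cim z * cim z, - 2 * cre z, 1:] dvd p"
proof -
  define D :: "'a poly" where "D = [:cre z * cre z + cim z * cim z, - 2 * cre z, 1:]"
  define m where "m = p mod D"
  have "degree m \<le> 1"
  proof (cases "m = 0")
    case False
    then show ?thesis using degree_mod_less[of D p] by (simp add: m_def D_def)
  qed simp
  then have m: "m = [:coeff m 0, coeff m 1:]"
    by (intro poly_eqI) (auto simp: coeff_pCons coeff_eq_0 split: nat.split)
  have "poly (map_poly ofR D) z = 0" by (simp add: D_def cpx_eq_iff algebra_simps)
  moreover have "map_poly ofR p = map_poly ofR (p div D) * map_poly ofR D + map_poly ofR m"
    using div_mult_mod_eq[of p D] unfolding m_def by (metis ofR_poly.hom_add ofR_poly.hom_mult)
  ultimately have "poly (map_poly ofR [:coeff m 0, coeff m 1:]) z = 0" using z m by simp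
  then have "coeff m 0 + coeff m 1 * cre z = 0" "coeff m 1 * cim z = 0"
    by (simp_all add: cpx_eq_iff ofR.map_poly_pCons_hom algebra_simps)
  then have "m = 0" using m \<open>cim z \<noteq> 0\<close> by simp
  then show ?thesis by (simp add: D_def m_def mod_eq_0_iff_dvd)
qed

lemma poly_linear_or_pos_quadratic_factor:
  fixes p :: "'a::real_closed_field poly"
  assumes "degree p > 0"
  shows "(\<exists>r q. p = [:- r, 1:] * q) \<or> (\<exists>u v q. v \<noteq> 0 \<and> p = [:u * u + v * v, - 2 * u, 1:] * q)"
proof -
  have "degree (map_poly ofR p) > 0" using assms by (simp add: degree_map_poly)
  then obtain z where z: "poly (map_poly ofR p) z = 0" using cpx_poly_has_root by blast
  show ?thesis
  proof (cases "cim z = 0")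
    case True
    then have "z = ofR (cre z)" by (simp add: cpx_eq_iff)
    then have "poly p (cre z) = 0" using z ofR.poly_map_poly[of p "cre z"] by simp
    then show ?thesis using poly_eq_0_iff_dvd by (metis dvdE)
  next
    case False
    then obtain q where "p = [:cre z * cre z + cim z * cim z, - 2 * cre z, 1:] * q"
      using conj_quadratic_dvd_if_root[OF z False] by (elim dvdE)
    then show ?thesis using False by blast
  qed
qed

lemma sign_change_of_factor:
  fixes D q :: "'a::linordered_idom poly"
  assumes "poly (D * q) x * poly (D * q) y < 0" "poly D x * poly D y > 0"
  shows "poly q x * poly q y < 0"
proof -
  have "poly (D * q) x * poly (D * q) y = (poly D x * poly D y) * (poly q x * poly q y)"
    by (simp add: algebra_simps)
  then have "(poly D x * poly D y) * (poly q x * poly q y) < 0" using assms(1) by (simp only: poly_mult)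
  then show ?thesis using assms(2) by (metis mult_less_0_iff order_less_asym)
qed

lemma poly_IVT_real_closed:
  fixes p :: "'a::real_closed_field poly"
  assumes "x < y" "poly p x * poly p y < 0"
  shows "\<exists>r. x < r \<and> r < y \<and> poly p r = 0"
  using assms(2)
proof (induction "degree p" arbitrary: p rule: less_induct)
  case less
  have "degree p > 0"
  proof (rule ccontr)
    assume "\<not> degree p > 0"
    then obtain c where "p = [:c:]" by (metis degree_eq_zeroE neq0_conv)
    then show False using less.prems by simp
  qed
  have factor: "\<exists>r. x < r \<and> r < y \<and> poly p r = 0"
    if pq: "p = D * q" and D: "degree D > 0" "poly D x * poly D y > 0" for D q
  proof -
    have "q \<noteq> 0" "D \<noteq> 0" using pq D(1) less.prems by auto
    then have "degree q < degree p" using pq D(1) by (simp add: degree_mult_eq)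
    moreover have "poly q x * poly q y < 0"
      using sign_change_of_factor[of D q x y] less.prems pq D(2) by simp
    ultimately obtain r where "x < r" "r < y" "poly q r = 0" using less.hyps by blast
    then show ?thesis using pq by auto
  qed
  from poly_linear_or_pos_quadratic_factor[OF \<open>degree p > 0\<close>] show ?case
  proof (elim disjE exE conjE)
    fix r q assume pq: "p = [:- r, 1:] * q"
    show ?case
    proof (cases "x < r \<and> r < y")
      case False
      have "x \<noteq> r" "y \<noteq> r" using less.prems pq by auto
      then have "(x - r) * (y - r) > 0" using False assms(1) by (auto intro: mult_pos_pos mult_neg_neg)
      then show ?thesis using factor[OF pq] by simp
    qed (use pq in auto)
  next
    fix u v q assume v: "v \<noteq> 0" and pq: "p = [:u * u + v * v, - 2 * u, 1:] * q"
    have "poly [:u * u + v * v, - 2 * u, 1:] t > 0" for t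
    proof -
      have "poly [:u * u + v * v, - 2 * u, 1:] t = (t - u) * (t - u) + v * v" by (simp add: algebra_simps)
      moreover have "v * v > 0" using v by (cases "v > 0") (auto intro: mult_pos_pos mult_neg_neg)
      ultimately show ?thesis by (metis add_nonneg_pos zero_le_square)
    qed
    then show ?thesis using factor[OF pq] by simp
  qed
qed

lemma sgn_poly_eq_if_no_roots:
  fixes G :: "'a::real_closed_field poly"
  assumes "x < y" "\<And>t. x \<le> t \<Longrightarrow> t \<le> y \<Longrightarrow> poly G t \<noteq> 0"
  shows "sgn (poly G x) = sgn (poly G y)"
proof (rule ccontr)
  assume ne: "sgn (poly G x) \<noteq> sgn (poly G y)"
  have "poly G x \<noteq> 0" "poly G y \<noteq> 0" using assms by auto
  then have "poly G x * poly G y < 0"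
    using ne by (auto simp: sgn_if mult_less_0_iff split: if_splits)
  then obtain r where "x < r" "r < y" "poly G r = 0" using poly_IVT_real_closed[OF assms(1)] by blast
  then show False using assms(2)[of r] by simp
qed

section \<open>Cauchy indices\<close>

lemma order_cofac_of_factorization:
  fixes U :: "'a::field poly"
  assumes P: "P = [:-x,1:]^m * U" and U: "poly U x \<noteq> 0"
  shows "order x P = m" "cofac P x = U" "P \<noteq> 0"
proof -
  have U0: "U \<noteq> 0" using U by auto
  have X0: "[:-x,1:]^m \<noteq> 0" by simp
  show P0: "P \<noteq> 0" using P U0 X0 by simp
  show om: "order x P = m" using P P0 order_mult[of "[:-x,1:]^m" U x] order_power_n_n order_0I[OF U] by simp
  have "cofac P x = P div [:-x,1:]^m" by (simp add: cofac_def om)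
  then show "cofac P x = U" using P X0 by simp
qed

lemma cofac_factorization:
  fixes P :: "'a::field poly"
  assumes "P \<noteq> 0"
  shows "P = [:-x,1:]^order x P * cofac P x" "poly (cofac P x) x \<noteq> 0"
proof -
  obtain q where q: "P = [:- x, 1:] ^ order x P * q" "\<not> [:- x, 1:] dvd q"
    using order_decomp[OF assms] by blast
  have "poly q x \<noteq> 0" using q(2) by (simp add: poly_eq_0_iff_dvd)
  then have "cofac P x = q" using order_cofac_of_factorization(2)[OF q(1)] by simp
  then show "P = [:-x,1:]^order x P * cofac P x" "poly (cofac P x) x \<noteq> 0"
    using q \<open>poly q x \<noteq> 0\<close> by auto
qed

lemma Ind_pt_nonzero:
  assumes "Ind_pt P Q x \<noteq> 0"
  shows "P \<noteq> 0" "Q \<noteq> 0" "order x P < order x Q"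
  using assms by (auto simp: Ind_pt_def Ind_plus_def Ind_minus_def split: if_splits)

lemma Ind_pt_root:
  assumes "Ind_pt P Q x \<noteq> 0" shows "poly Q x = 0"
  using Ind_pt_nonzero[OF assms] order_root[of Q x] by auto

lemma finite_Ind_pt: "finite {x. Ind_pt P Q x \<noteq> 0}"
proof (cases "Q = 0")
  case True
  then have "{x. Ind_pt P Q x \<noteq> 0} = {}" using Ind_pt_nonzero(2) by blast
  then show ?thesis by simp
next
  case False
  have "{x. Ind_pt P Q x \<noteq> 0} \<subseteq> {x. poly Q x = 0}" using Ind_pt_root by auto
  then show ?thesis using poly_roots_finite[OF False] finite_subset by blast
qed

lemma Ind_lt_split:
  assumes "a < c" "c < b"
  shows "Ind_lt P Q a b = Ind_lt P Q a c + Ind_lt P Q c b"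
proof -
  let ?Z = "{x. Ind_pt P Q x \<noteq> 0}"
  have fin: "finite ?Z" by (rule finite_Ind_pt)
  let ?S = "\<lambda>u v. {x. u < x \<and> x < v \<and> Ind_pt P Q x \<noteq> 0}"
  have fS: "finite (?S u v)" for u v by (rule finite_subset[OF _ fin]) auto
  have eq: "?S a b = ?S a c \<union> (?S c b \<union> {x. x = c \<and> Ind_pt P Q x \<noteq> 0})"
    using assms by auto
  have d1: "?S a c \<inter> (?S c b \<union> {x. x = c \<and> Ind_pt P Q x \<noteq> 0}) = {}" by auto
  have d2: "?S c b \<inter> {x. x = c \<and> Ind_pt P Q x \<noteq> 0} = {}" by auto
  have fc: "finite {x. x = c \<and> Ind_pt P Q x \<noteq> 0}" by simp
  have c: "(\<Sum>x\<in>{x. x = c \<and> Ind_pt P Q x \<noteq> 0}. Ind_pt P Q x) = Ind_pt P Q c"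
  proof -
    have "{x. x = c \<and> Ind_pt P Q x \<noteq> 0} = (if Ind_pt P Q c \<noteq> 0 then {c} else {})" by auto
    then show ?thesis by simp
  qed
  have "(\<Sum>x\<in>?S a b. Ind_pt P Q x) = (\<Sum>x\<in>?S a c. Ind_pt P Q x) + (\<Sum>x\<in>?S c b. Ind_pt P Q x) + Ind_pt P Q c"
    unfolding eq using fS d1 d2 fc c by (simp add: sum.union_disjoint)
  then show ?thesis unfolding Ind_lt_def Ind_pt_def by simp
qed

lemma shear_order_cofac:
  fixes P Q :: "'a::field poly"
  assumes P0: "P \<noteq> 0" and Q0: "Q \<noteq> 0" and lt: "order x P < order x Q"
  shows "P + smult r Q \<noteq> 0 \<and> order x (P + smult r Q) = order x P \<and>
         poly (cofac (P + smult r Q) x) x = poly (cofac P x) x"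
proof -
  let ?X = "[:-x,1:]"
  define d where "d = order x Q - order x P"
  have d: "d > 0" "order x Q = order x P + d" using lt by (auto simp: d_def)
  have P: "P = ?X^order x P * cofac P x" "poly (cofac P x) x \<noteq> 0" using cofac_factorization[OF P0] by auto
  have Q: "Q = ?X^order x Q * cofac Q x" using cofac_factorization[OF Q0] by auto
  define W where "W = cofac P x + smult r (?X^d * cofac Q x)"
  have "P + smult r Q = ?X^order x P * W"
    unfolding W_def using P(1) Q d(2)
    by (simp add: algebra_simps power_add)
  moreover have "poly W x = poly (cofac P x) x" using d(1) by (simp add: W_def)
  ultimately show ?thesis using order_cofac_of_factorization[of "P + smult r Q" x "order x P" W] P(2) by auto
qed

lemma shear_order_not_less:
  fixes P Q :: "'a::field poly"
  assumes nlt: "\<not> (P \<noteq> 0 \<and> order x P < order x Q)"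
  shows "\<not> (P + smult r Q \<noteq> 0 \<and> order x (P + smult r Q) < order x Q)"
proof
  assume a: "P + smult r Q \<noteq> 0 \<and> order x (P + smult r Q) < order x Q"
  have "[:-x, 1:] ^ order x Q dvd P" using nlt by (auto simp: order_divides)
  moreover have "[:-x, 1:] ^ order x Q dvd smult r Q" using order_1[of x Q] by (rule dvd_smult)
  ultimately have "[:-x, 1:] ^ order x Q dvd P + smult r Q" by (rule dvd_add)
  then show False using a by (simp add: order_divides)
qed

lemma Ind_plus_shear: "Ind_plus (P + smult r Q) Q x = Ind_plus P Q x"
proof (cases "Q = 0")
  case True then show ?thesis by (simp add: Ind_plus_def)
next
  case Q0: False
  show ?thesis
  proof (cases "P \<noteq> 0 \<and> order x P < order x Q")
    case True
    then show ?thesis using shear_order_cofac[of P Q x r] Q0 by (auto simp: Ind_plus_def)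
  next
    case False
    then show ?thesis using shear_order_not_less[OF False, of r] by (auto simp: Ind_plus_def)
  qed
qed

lemma Ind_minus_shear: "Ind_minus (P + smult r Q) Q x = Ind_minus P Q x"
proof (cases "Q = 0")
  case True then show ?thesis by (simp add: Ind_minus_def)
next
  case Q0: False
  show ?thesis
  proof (cases "P \<noteq> 0 \<and> order x P < order x Q")
    case True
    then show ?thesis using shear_order_cofac[of P Q x r] Q0 by (auto simp: Ind_minus_def)
  next
    case False
    then show ?thesis using shear_order_not_less[OF False, of r] by (auto simp: Ind_minus_def)
  qed
qed

lemma Ind_pt_shear: "Ind_pt (P + smult r Q) Q x = Ind_pt P Q x"
  by (simp add: Ind_pt_def Ind_plus_shear Ind_minus_shear)

lemma Ind_lt_shear: "Ind_lt (P + smult r Q) Q a b = Ind_lt P Q a b"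
  by (simp add: Ind_lt_def Ind_pt_shear Ind_plus_shear Ind_minus_shear)

lemma cofac_smult: "c \<noteq> 0 \<Longrightarrow> cofac (smult c P) x = smult c (cofac P x)"
  by (simp add: cofac_def order_smult div_smult_left)

lemma Ind_plus_scale:
  assumes "c \<noteq> 0" "k \<noteq> 0"
  shows "Ind_plus (smult c P) (smult k Q) x = sgn (c * k) * Ind_plus P Q x"
  using assms by (auto simp: Ind_plus_def order_smult cofac_smult sgn_mult algebra_simps)

lemma Ind_minus_scale:
  assumes "c \<noteq> 0" "k \<noteq> 0"
  shows "Ind_minus (smult c P) (smult k Q) x = sgn (c * k) * Ind_minus P Q x"
  using assms by (auto simp: Ind_minus_def order_smult cofac_smult sgn_mult algebra_simps)

lemma Ind_pt_scale:
  assumes "c \<noteq> 0" "k \<noteq> 0"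
  shows "Ind_pt (smult c P) (smult k Q) x = sgn (c * k) * Ind_pt P Q x"
  using assms by (simp add: Ind_pt_def Ind_plus_scale Ind_minus_scale algebra_simps)

lemma Ind_lt_scale:
  fixes P Q :: "'a::linordered_field poly"
  assumes "c \<noteq> 0" "k \<noteq> 0"
  shows "Ind_lt (smult c P) (smult k Q) a b = sgn (c * k) * Ind_lt P Q a b"
proof -
  have s: "sgn (c * k) \<noteq> 0" using assms by (simp add: sgn_0_0)
  have "{x. a < x \<and> x < b \<and> Ind_pt (smult c P) (smult k Q) x \<noteq> 0}
      = {x. a < x \<and> x < b \<and> Ind_pt P Q x \<noteq> 0}"
    using s by (simp add: Ind_pt_scale[OF assms])
  then show ?thesis
    by (simp add: Ind_lt_def Ind_pt_scale[OF assms] Ind_plus_scale[OF assms] Ind_minus_scale[OF assms]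
        sum_distrib_left algebra_simps)
qed

section \<open>The inversion and rotation formulas\<close>

definition quot_sgn :: "'a::linordered_field poly \<Rightarrow> 'a poly \<Rightarrow> 'a \<Rightarrow> 'a" where
  "quot_sgn P Q x = (if P \<noteq> 0 \<and> Q \<noteq> 0 \<and> order x P = order x Q
     then sgn (poly (cofac P x) x * poly (cofac Q x) x) else 0)"

lemma quot_sgn_commute: "quot_sgn P Q x = quot_sgn Q P x"
  by (auto simp: quot_sgn_def mult.commute)

lemma Ind_plus_swap_add:
  assumes "P \<noteq> 0" "Q \<noteq> 0"
  shows "Ind_plus P Q a + Ind_plus Q P a + quot_sgn P Q a / 2 = sgn (poly (cofac P a) a * poly (cofac Q a) a) / 2"
  using assms by (auto simp: Ind_plus_def quot_sgn_def mult.commute)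

lemma minus_one_power_nat_diff:
  assumes "p < (q::nat)"
  shows "((-1::'a::comm_ring_1) ^ nat (int q - int p)) = (-1) ^ (p + q)"
proof -
  have n: "nat (int q - int p) = q - p" using assms by simp
  have e: "p + q = (q - p) + 2 * p" using assms by simp
  have "(-1::'a) ^ (p + q) = (-1) ^ (q - p) * ((-1) ^ 2) ^ p"
    by (subst e) (simp only: power_add power_mult)
  then show ?thesis using n by simp
qed

lemma Ind_minus_swap_add:
  assumes "P \<noteq> 0" "Q \<noteq> 0"
  shows "Ind_minus P Q b + Ind_minus Q P b + quot_sgn P Q b / 2
       = (-1) ^ (order b P + order b Q) * sgn (poly (cofac P b) b * poly (cofac Q b) b) / 2"
proof -
  consider "order b P < order b Q" | "order b Q < order b P" | "order b P = order b Q" by linarith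
  then show ?thesis
  proof cases
    case 1
    then show ?thesis using assms minus_one_power_nat_diff[OF 1, where 'a='a]
      by (auto simp: Ind_minus_def quot_sgn_def)
  next
    case 2
    then show ?thesis using assms minus_one_power_nat_diff[OF 2, where 'a='a]
      by (auto simp: Ind_minus_def quot_sgn_def mult.commute add.commute)
  next
    case 3
    then show ?thesis using assms by (auto simp: Ind_minus_def quot_sgn_def simp flip: mult_2 power_mult)
  qed
qed

lemma Ind_lt_zero_left: "Ind_lt 0 Q a b = 0"
  by (simp add: Ind_lt_def Ind_pt_def Ind_plus_def Ind_minus_def)
lemma Ind_lt_zero_right: "Ind_lt P 0 a b = 0"
  by (simp add: Ind_lt_def Ind_pt_def Ind_plus_def Ind_minus_def)

lemma Ind_lt_no_roots:
  assumes "\<And>x. a < x \<Longrightarrow> x < b \<Longrightarrow> poly Q x \<noteq> 0"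
  shows "Ind_lt P Q a b = Ind_plus P Q a - Ind_minus P Q b"
proof -
  have "{x. a < x \<and> x < b \<and> Ind_pt P Q x \<noteq> 0} = {}" using assms Ind_pt_root by blast
  then show ?thesis by (simp add: Ind_lt_def)
qed

lemma sgn_poly_right_of_root:
  fixes R G :: "'a::real_closed_field poly"
  assumes R: "R = [:-a, 1:] ^ k * G" and G: "poly G a \<noteq> 0"
    and m: "a < m" "\<And>t. a < t \<Longrightarrow> t \<le> m \<Longrightarrow> poly R t \<noteq> 0"
  shows "sgn (poly R m) = sgn (poly G a)"
proof -
  have "sgn (poly G a) = sgn (poly G m)"
  proof (rule sgn_poly_eq_if_no_roots[OF m(1)])
    show "poly G t \<noteq> 0" if "a \<le> t" "t \<le> m" for t
      using G m(2)[of t] that R by (cases "t = a") auto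
  qed
  moreover have "sgn ((m - a) ^ k) = 1" using m(1) by (simp add: power_sgn)
  ultimately show ?thesis using R by (simp add: sgn_mult)
qed

lemma sgn_poly_left_of_root:
  fixes R G :: "'a::real_closed_field poly"
  assumes R: "R = [:-b, 1:] ^ k * G" and G: "poly G b \<noteq> 0"
    and m: "m < b" "\<And>t. m \<le> t \<Longrightarrow> t < b \<Longrightarrow> poly R t \<noteq> 0"
  shows "sgn (poly R m) = (-1) ^ k * sgn (poly G b)"
proof -
  have "sgn (poly G m) = sgn (poly G b)"
  proof (rule sgn_poly_eq_if_no_roots[OF m(1)])
    show "poly G t \<noteq> 0" if "m \<le> t" "t \<le> b" for t
      using G m(2)[of t] that R by (cases "t = b") auto
  qed
  moreover have "sgn ((m - b) ^ k) = (-1) ^ k" using m(1) by (simp add: power_sgn)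
  ultimately show ?thesis using R by (simp add: sgn_mult)
qed

lemma Ind_lt_swap_add_no_roots:
  fixes P Q :: "'a::real_closed_field poly"
  assumes P0: "P \<noteq> 0" and Q0: "Q \<noteq> 0" and ab: "a < b"
    and nr: "\<And>x. a < x \<Longrightarrow> x < b \<Longrightarrow> poly (P * Q) x \<noteq> 0"
  shows "Ind_lt P Q a b + Ind_lt Q P a b = (quot_sgn P Q b - quot_sgn P Q a) / 2"
proof -
  have e1: "Ind_lt P Q a b = Ind_plus P Q a - Ind_minus P Q b"
    and e2: "Ind_lt Q P a b = Ind_plus Q P a - Ind_minus Q P b"
    using nr by (auto intro!: Ind_lt_no_roots)
  have R: "P * Q = [:-x, 1:] ^ (order x P + order x Q) * (cofac P x * cofac Q x)"
    and G: "poly (cofac P x * cofac Q x) x \<noteq> 0" for x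
    using cofac_factorization[OF P0, of x] cofac_factorization[OF Q0, of x]
    by (metis (no_types, lifting) mult.assoc mult.left_commute power_add, simp)
  define m where "m = (a + b) / 2"
  have m: "a < m" "m < b" using ab by (auto simp: m_def field_simps)
  have "sgn (poly (P * Q) m) = sgn (poly (cofac P a * cofac Q a) a)"
    by (rule sgn_poly_right_of_root[OF R G m(1)]) (use nr m in auto)
  moreover have "sgn (poly (P * Q) m)
      = (-1) ^ (order b P + order b Q) * sgn (poly (cofac P b * cofac Q b) b)"
    by (rule sgn_poly_left_of_root[OF R G m(2)]) (use nr m in auto)
  ultimately show ?thesis
    using Ind_plus_swap_add[OF P0 Q0, of a] Ind_minus_swap_add[OF P0 Q0, of b]
    unfolding e1 e2 by (simp add: sgn_mult field_simps)
qed

lemma Ind_lt_swap_add: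
  fixes P Q :: "'a::real_closed_field poly"
  assumes ab: "a < b"
  shows "Ind_lt P Q a b + Ind_lt Q P a b = (quot_sgn P Q b - quot_sgn P Q a) / 2"
proof (cases "P = 0 \<or> Q = 0")
  case True
  then show ?thesis by (auto simp: Ind_lt_zero_left Ind_lt_zero_right quot_sgn_def)
next
  case False
  then have P0: "P \<noteq> 0" and Q0: "Q \<noteq> 0" by auto
  have R0: "P * Q \<noteq> 0" using P0 Q0 by simp
  define K where "K a b = Ind_lt P Q a b + Ind_lt Q P a b - (quot_sgn P Q b - quot_sgn P Q a) / 2" for a b
  have Ksplit: "K a b = K a c + K c b" if "a < c" "c < b" for a b c
    unfolding K_def using Ind_lt_split[OF that, of P Q] Ind_lt_split[OF that, of Q P]
    by (simp add: field_simps)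
  define Z where "Z a b = {x. a < x \<and> x < b \<and> poly (P * Q) x = 0}" for a b
  have finZ: "finite (Z a b)" for a b
    by (rule finite_subset[OF _ poly_roots_finite[OF R0]]) (auto simp: Z_def)
  have "\<forall>a b. a < b \<longrightarrow> card (Z a b) = n \<longrightarrow> K a b = 0" for n
  proof (induction n rule: less_induct)
    case (less n)
    show ?case
    proof (intro allI impI)
      fix a b assume ab: "a < b" and cn: "card (Z a b) = n"
      show "K a b = 0"
      proof (cases "Z a b = {}")
        case True
        then have "\<And>x. a < x \<Longrightarrow> x < b \<Longrightarrow> poly (P * Q) x \<noteq> 0" by (auto simp: Z_def)
        then show ?thesis using Ind_lt_swap_add_no_roots[OF P0 Q0 ab] unfolding K_def by simp
      next
        case False
        then obtain c where c: "c \<in> Z a b" by blast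
        then have ac: "a < c" "c < b" by (auto simp: Z_def)
        have s1: "Z a c \<subset> Z a b" using c ac by (auto simp: Z_def)
        have s2: "Z c b \<subset> Z a b" using c ac by (auto simp: Z_def)
        have "card (Z a c) < n" using psubset_card_mono[OF finZ s1] cn by simp
        then have "K a c = 0" using less.IH ac(1) by blast
        moreover have "card (Z c b) < n" using psubset_card_mono[OF finZ s2] cn by simp
        then have "K c b = 0" using less.IH ac(2) by blast
        ultimately show ?thesis using Ksplit[OF ac] by simp
      qed
    qed
  qed
  then have "K a b = 0" using ab by blast
  then show ?thesis unfolding K_def by simp
qed

definition Ind_antisym :: "'a::linordered_field poly \<Rightarrow> 'a poly \<Rightarrow> 'a \<Rightarrow> 'a \<Rightarrow> 'a" where
  "Ind_antisym P Q a b = Ind_lt P Q a b - Ind_lt Q P a b"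

text \<open>Writing \<open>P' = c (P - (d/c) Q)\<close> and \<open>Q' = ((c\<^sup>2 + d\<^sup>2)/c) Q + (d/c) P'\<close>, invariance
  under shears and scalings reduces \<open>Ind_antisym P' Q' - Ind_antisym P Q\<close> to three instances of
  the inversion formula \<open>Ind_lt_swap_add\<close>, one for each pair occurring below.\<close>

definition rot_corr :: "'a::linordered_field \<Rightarrow> 'a \<Rightarrow> 'a poly \<Rightarrow> 'a poly \<Rightarrow> 'a \<Rightarrow> 'a" where
  "rot_corr c d P Q x = (quot_sgn (smult c P - smult d Q) (smult d P + smult c Q) x
      - 2 * quot_sgn (P - smult (d / c) Q) Q x + quot_sgn P Q x) / 2"

lemma Ind_antisym_rotate:
  fixes P Q :: "'a::real_closed_field poly" and c d :: 'a
  assumes c0: "c \<noteq> 0" and ab: "a < b"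
  defines "P' \<equiv> smult c P - smult d Q"
    and "Q' \<equiv> smult d P + smult c Q"
  shows "Ind_antisym P' Q' a b = Ind_antisym P Q a b + (rot_corr c d P Q b - rot_corr c d P Q a)"
proof -
  define s where "s = d / c"
  define k where "k = (c * c + d * d) / c"
  define U where "U = P - smult s Q"
  have cs: "c * s = d" using c0 by (simp add: s_def)
  have kc: "k * c > 0" using c0 by (simp add: k_def sum_squares_gt_zero_iff)
  have k0: "k \<noteq> 0" using kc by auto
  have P'U: "P' = smult c U"
    unfolding P'_def U_def by (simp add: smult_diff_right cs)
  have Q'e: "Q' = smult k Q + smult s P'"
  proof -
    have "k - s * d = c" using c0 by (simp add: k_def s_def field_simps)
    then have "smult k Q + smult s P' = smult d P + smult (k - s * d) Q"
      unfolding P'_def using cs by (simp add: smult_diff_right smult_diff_left algebra_simps)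
    then show ?thesis unfolding Q'_def using \<open>k - s * d = c\<close> by simp
  qed
  have i1: "Ind_lt Q' P' a b = Ind_lt Q U a b"
  proof -
    have "Ind_lt Q' P' a b = Ind_lt (smult k Q) P' a b"
      unfolding Q'e by (rule Ind_lt_shear)
    also have "\<dots> = Ind_lt (smult k Q) (smult c U) a b" by (simp add: P'U)
    also have "\<dots> = sgn (k * c) * Ind_lt Q U a b" by (rule Ind_lt_scale[OF k0 c0])
    finally show ?thesis using kc by simp
  qed
  have i2: "Ind_lt U Q a b = Ind_lt P Q a b"
    unfolding U_def using Ind_lt_shear[of P "- s" Q a b] by simp
  have b1: "Ind_lt Q U a b + Ind_lt U Q a b = (quot_sgn U Q b - quot_sgn U Q a) / 2"
    using Ind_lt_swap_add[OF ab, of Q U] quot_sgn_commute[of Q U] by simp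
  have b2: "Ind_lt P' Q' a b + Ind_lt Q' P' a b = (quot_sgn P' Q' b - quot_sgn P' Q' a) / 2"
    by (rule Ind_lt_swap_add[OF ab])
  have b3: "Ind_lt P Q a b + Ind_lt Q P a b = (quot_sgn P Q b - quot_sgn P Q a) / 2"
    by (rule Ind_lt_swap_add[OF ab])
  show ?thesis
    unfolding Ind_antisym_def rot_corr_def P'_def[symmetric] Q'_def[symmetric] s_def[symmetric]
      U_def[symmetric]
    using i1 i2 b1 b2 b3 by (simp add: field_simps)
qed

lemma Ind_antisym_rotate_quarter:
  assumes "d \<noteq> 0"
  shows "Ind_antisym (- smult d Q) (smult d P) a b = Ind_antisym P Q a b"
proof -
  have "sgn (- d * d) = -1" "sgn (d * - d) = -1" using assms
    by (simp_all add: sgn_mult sgn_if zero_less_mult_iff mult_less_0_iff)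
  then show ?thesis
    using Ind_lt_scale[of "- d" d Q P a b] Ind_lt_scale[of d "- d" P Q a b] assms
    by (simp add: Ind_antisym_def)
qed

lemma quot_sgn_common_factor_left:
  fixes U V :: "'a::linordered_field poly"
  assumes P: "P = [:-x, 1:] ^ m * U" and Q: "Q = [:-x, 1:] ^ m * V" and U: "poly U x \<noteq> 0"
  shows "quot_sgn P Q x = sgn (poly U x * poly V x)"
proof (cases "poly V x = 0")
  case False
  then show ?thesis
    using order_cofac_of_factorization[OF P U] order_cofac_of_factorization[OF Q] by (simp add: quot_sgn_def)
next
  case True
  have "Q = 0 \<or> order x Q \<noteq> m"
  proof (cases "V = 0")
    case False
    then have "order x Q = m + order x V"
      using Q order_mult[of "[:-x, 1:] ^ m" V x] order_power_n_n by simp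
    moreover have "order x V > 0" using True False order_gt_0_iff by blast
    ultimately show ?thesis by simp
  qed (simp add: Q)
  then show ?thesis using order_cofac_of_factorization[OF P U] True by (auto simp: quot_sgn_def)
qed

lemma quot_sgn_common_factor:
  fixes U V :: "'a::linordered_field poly"
  assumes P: "P = [:-x, 1:] ^ m * U" and Q: "Q = [:-x, 1:] ^ m * V"
    and nz: "poly U x \<noteq> 0 \<or> poly V x \<noteq> 0"
  shows "quot_sgn P Q x = sgn (poly U x * poly V x)"
  using nz quot_sgn_common_factor_left[OF P Q] quot_sgn_common_factor_left[OF Q P]
  by (auto simp: quot_sgn_commute[of P] mult.commute)

definition rot_corr_val :: "'a::linordered_field \<Rightarrow> 'a \<Rightarrow> 'a \<Rightarrow> 'a \<Rightarrow> 'a" where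
  "rot_corr_val c d p q = (sgn ((c * p - d * q) * (d * p + c * q)) - 2 * sgn ((p - d / c * q) * q) + sgn (p * q)) / 2"

lemma rot_corr_common_factor:
  fixes U V :: "'a::linordered_field poly"
  assumes c0: "c \<noteq> 0"
    and P: "P = [:-x,1:]^m * U" and Q: "Q = [:-x,1:]^m * V"
    and nz: "poly U x \<noteq> 0 \<or> poly V x \<noteq> 0"
  shows "rot_corr c d P Q x = rot_corr_val c d (poly U x) (poly V x)"
proof -
  let ?X = "[:-x,1:]^m"
  have t1: "quot_sgn (smult c P - smult d Q) (smult d P + smult c Q) x
      = sgn (poly (smult c U - smult d V) x * poly (smult d U + smult c V) x)"
  proof (rule quot_sgn_common_factor)
    show "smult c P - smult d Q = ?X * (smult c U - smult d V)"
      using P Q by (simp add: algebra_simps)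
    show "smult d P + smult c Q = ?X * (smult d U + smult c V)"
      using P Q by (simp add: algebra_simps)
    show "poly (smult c U - smult d V) x \<noteq> 0 \<or>
          poly (smult d U + smult c V) x \<noteq> 0"
    proof (rule ccontr)
      assume "\<not> ?thesis"
      then have e: "c * poly U x - d * poly V x = 0" "d * poly U x + c * poly V x = 0" by auto
      have "(c * c + d * d) * poly U x = c * (c * poly U x - d * poly V x) + d * (d * poly U x + c * poly V x)"
        by (simp add: algebra_simps)
      then have "(c * c + d * d) * poly U x = 0" using e by simp
      moreover have "(c * c + d * d) * poly V x = c * (d * poly U x + c * poly V x) - d * (c * poly U x - d * poly V x)"
        by (simp add: algebra_simps)
      then have "(c * c + d * d) * poly V x = 0" using e by simp
      moreover have "c * c + d * d \<noteq> 0" using c0 by (simp add: sum_squares_eq_zero_iff)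
      ultimately show False using nz by (metis mult_eq_0_iff)
    qed
  qed
  have t2: "quot_sgn (P - smult (d / c) Q) Q x = sgn (poly (U - smult (d / c) V) x * poly V x)"
  proof (rule quot_sgn_common_factor)
    show "P - smult (d / c) Q = ?X * (U - smult (d / c) V)"
      using P Q by (simp add: algebra_simps)
    show "Q = ?X * V" by (rule Q)
    show "poly (U - smult (d / c) V) x \<noteq> 0 \<or> poly V x \<noteq> 0" using nz by auto
  qed
  have t3: "quot_sgn P Q x = sgn (poly U x * poly V x)" by (rule quot_sgn_common_factor[OF P Q nz])
  show ?thesis unfolding rot_corr_def rot_corr_val_def t1 t2 t3 by simp
qed

lemma sgn_add_shear_eq_if_sgn_diff_shear_ne:
  fixes p q s :: "'a::linordered_field"
  assumes "sgn p \<noteq> sgn (p - s * q)"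
  shows "sgn (q + s * p) = sgn q"
proof -
  have pos: "sgn (q + s * p) = sgn q" if "p > 0" "sgn p \<noteq> sgn (p - s * q)" for p q :: 'a
  proof -
    have "s * q > 0" using that by (auto simp: sgn_if split: if_splits)
    then have "s > 0 \<and> q > 0 \<or> s < 0 \<and> q < 0" by (simp add: zero_less_mult_iff)
    then show ?thesis
    proof (elim disjE conjE)
      assume "s > 0" "q > 0"
      then have "q + s * p > 0" using that(1) by (intro add_pos_pos mult_pos_pos)
      then show ?thesis using \<open>q > 0\<close> by simp
    next
      assume "s < 0" "q < 0"
      then have "q + s * p < 0" using that(1) by (intro add_neg_neg mult_neg_pos)
      then show ?thesis using \<open>q < 0\<close> by simp
    qed
  qed
  consider "p = 0" | "p > 0" | "p < 0" by linarith
  then show ?thesis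
  proof cases
    case 3
    have "sgn (s * q - p) = - sgn (p - s * q)" using Rings.sgn_minus[of "p - s * q"] by simp
    then have "sgn (- p) \<noteq> sgn (- p - s * - q)" using assms by (simp add: Rings.sgn_minus)
    then have "sgn (- q + s * - p) = sgn (- q)" using pos[of "- p" "- q"] 3 by simp
    moreover have "- q + s * - p = - (q + s * p)" by simp
    ultimately show ?thesis by (simp only: Rings.sgn_minus)
  qed (use assms pos in auto)
qed

lemma sgn_shear_product_eq_0:
  fixes p q s :: "'a::linordered_field"
  shows "(sgn p - sgn (p - s * q)) * (sgn (q + s * p) - sgn q) = 0"
  using sgn_add_shear_eq_if_sgn_diff_shear_ne[of p s q] by fastforce

lemma rot_corr_val_times_ii:
  fixes c d p q :: "'a::linordered_field"
  assumes c0: "c \<noteq> 0"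
  shows "rot_corr_val c d (- q) p = rot_corr_val c d p q"
proof -
  define s where "s = d / c"
  have d: "d = c * s" using c0 by (simp add: s_def)
  have e1: "sgn ((c * - q - d * p) * (d * - q + c * p)) = - sgn ((p - s * q) * (q + s * p))"
  proof -
    have "(c * - q - d * p) * (d * - q + c * p) = - ((c * c) * ((p - s * q) * (q + s * p)))"
      unfolding d by (simp add: algebra_simps)
    moreover have "c * c > 0" using c0 by (cases "c > 0") (auto intro: mult_pos_pos mult_neg_neg)
    ultimately show ?thesis using c0 by (simp add: sgn_mult)
  qed
  have e2: "sgn ((c * p - d * q) * (d * p + c * q)) = sgn ((p - s * q) * (q + s * p))"
  proof -
    have "(c * p - d * q) * (d * p + c * q) = (c * c) * ((p - s * q) * (q + s * p))"
      unfolding d by (simp add: algebra_simps)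
    moreover have "c * c > 0" using c0 by (cases "c > 0") (auto intro: mult_pos_pos mult_neg_neg)
    ultimately show ?thesis using c0 by (simp add: sgn_mult)
  qed
  define A where "A = sgn (p - s * q)"
  define B where "B = sgn (q + s * p)"
  have h: "- q - s * p = - (q + s * p)" by simp
  have L: "rot_corr_val c d p q = (A * B - 2 * (A * sgn q) + sgn p * sgn q) / 2"
    unfolding rot_corr_val_def s_def[symmetric] e2 A_def B_def by (simp only: sgn_mult)
  have R: "rot_corr_val c d (- q) p = (- (A * B) - 2 * (- B * sgn p) + (- sgn q) * sgn p) / 2"
    unfolding rot_corr_val_def s_def[symmetric] e1 A_def B_def h by (simp only: sgn_mult Rings.sgn_minus)
  have key: "B * sgn p + A * sgn q = A * B + sgn p * sgn q"
    using sgn_shear_product_eq_0[of p s q] unfolding A_def B_def by (simp add: algebra_simps)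
  show ?thesis unfolding L R using key by (simp add: field_simps)
qed

section \<open>Complexification of pairs of polynomials\<close>

definition cpx_poly :: "'a::comm_ring_1 poly \<times> 'a poly \<Rightarrow> 'a cpx poly" where
  "cpx_poly z = map_poly ofR (fst z) + smult ii (map_poly ofR (snd z))"

lemma coeff_cpx_poly: "coeff (cpx_poly z) i = Cpx (coeff (fst z) i) (coeff (snd z) i)"
  by (simp add: cpx_poly_def cpx_eq_iff)

lemma fst_cpx_poly: "map_poly cre (cpx_poly z) = fst z"
  by (rule poly_eqI) (simp add: coeff_map_poly coeff_cpx_poly)

lemma snd_cpx_poly: "map_poly cim (cpx_poly z) = snd z"
  by (rule poly_eqI) (simp add: coeff_map_poly coeff_cpx_poly)

lemma cpx_poly_inj: "cpx_poly z = cpx_poly w \<Longrightarrow> z = w"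
  by (metis fst_cpx_poly snd_cpx_poly prod_eq_iff)

lemma cpx_poly_zero_iff: "cpx_poly z = 0 \<longleftrightarrow> z = (0, 0)"
proof
  assume "cpx_poly z = 0"
  then have "cpx_poly z = cpx_poly (0,0)" by (simp add: cpx_poly_def)
  then show "z = (0,0)" by (rule cpx_poly_inj)
qed (simp add: cpx_poly_def)

lemma cpx_poly_decomp: "cpx_poly (map_poly cre R, map_poly cim R) = R"
  by (rule poly_eqI) (simp add: coeff_cpx_poly coeff_map_poly cpx_eq_iff)

lemma cpx_poly_pair_mult:
  "cpx_poly (A1 * A2 - B1 * B2, A1 * B2 + B1 * A2) = cpx_poly (A1, B1) * cpx_poly (A2, B2)"
  by (simp add: cpx_poly_def ofR_poly.hom_mult ofR_poly.hom_add ofR_poly.hom_minus algebra_simps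
      mult_smult_left mult_smult_right smult_add_right)

lemma cpx_poly_cmul: "cpx_poly (cmul z w) = cpx_poly z * cpx_poly w"
  using cpx_poly_pair_mult[of "fst z" "fst w" "snd z" "snd w"] by (simp add: cmul_def)

lemma map_cnj_ofR: "map_poly cnj (map_poly ofR p) = map_poly ofR p"
  by (rule poly_eqI) (simp add: coeff_map_poly)

lemma cpx_poly_cconj: "cpx_poly (cconj z) = map_poly cnj (cpx_poly z)"
  by (simp add: cpx_poly_def cconj_def cnj_poly.hom_add cnj.map_poly_hom_smult map_cnj_ofR ofR_poly.hom_uminus)

lemma cpx_poly_rot:
  "cpx_poly (smult c A - smult d B, smult d A + smult c B)
   = smult (Cpx c d) (cpx_poly (A, B))"
proof -
  have e: "Cpx c d = ofR c + ii * ofR d" by (simp add: cpx_eq_iff)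
  show ?thesis unfolding e
    by (simp add: cpx_poly_def ofR_poly.hom_add ofR_poly.hom_minus ofR.map_poly_hom_smult algebra_simps
        smult_add_right smult_add_left smult_diff_right smult_diff_left)
qed

lemma cpx_poly_realmult: "cpx_poly (L * U, L * V) = map_poly ofR L * cpx_poly (U, V)"
  by (simp add: cpx_poly_def ofR_poly.hom_mult algebra_simps mult_smult_right)

lemma poly_cpx_poly_real: "poly (cpx_poly (U, V)) (ofR x) = Cpx (poly U x) (poly V x)"
  by (simp add: cpx_poly_def ofR.poly_map_poly cpx_eq_iff)

lemma cpx_poly_constpair: "cpx_poly (A + X, Y) = map_poly ofR A + cpx_poly (X, Y)"
  by (simp add: cpx_poly_def ofR_poly.hom_add)

lemma ceval_pCons:
  "ceval (pCons a p) z = ([:a:] + fst (cmul z (ceval p z)), snd (cmul z (ceval p z)))"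
proof (cases "a = 0 \<and> p = 0")
  case True
  then show ?thesis by (simp add: ceval_def cmul_def)
next
  case False
  then show ?thesis unfolding ceval_def by (auto simp: fold_coeffs_pCons_not_0_0_eq)
qed

lemma cpx_poly_ceval: "cpx_poly (ceval p z) = pcompose (map_poly ofR p) (cpx_poly z)"
proof (induct p)
  case 0
  then show ?case by (simp add: ceval_def cpx_poly_def)
next
  case (pCons a p)
  have "cpx_poly (ceval (pCons a p) z) = map_poly ofR [:a:] + cpx_poly (cmul z (ceval p z))"
    unfolding ceval_pCons by (simp add: cpx_poly_constpair)
  also have "\<dots> = [:ofR a:] + cpx_poly z * pcompose (map_poly ofR p) (cpx_poly z)"
    using pCons(2) by (simp add: cpx_poly_cmul ofR.map_poly_pCons_hom)
  also have "\<dots> = pcompose (map_poly ofR (pCons a p)) (cpx_poly z)"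
    by (simp add: ofR.map_poly_pCons_hom pcompose_pCons)
  finally show ?case .
qed

lemma cpx_poly_restr: "cpx_poly (restr F z) = pcompose (cpx_poly F) (cpx_poly z)"
proof -
  obtain A1 A2 where A: "ceval (fst F) z = (A1, A2)" by fastforce
  obtain B1 B2 where B: "ceval (snd F) z = (B1, B2)" by fastforce
  have "cpx_poly (restr F z) = cpx_poly (A1, A2) + smult ii (cpx_poly (B1, B2))"
    unfolding restr_def Let_def A B
    by (simp add: cpx_poly_def ofR_poly.hom_add ofR_poly.hom_minus algebra_simps smult_add_right)
  also have "\<dots> = pcompose (cpx_poly F) (cpx_poly z)"
    using cpx_poly_ceval[of "fst F" z] cpx_poly_ceval[of "snd F" z] unfolding A B
    by (simp add: cpx_poly_def pcompose_add pcompose_smult)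
  finally show ?thesis .
qed

lemma cpx_poly_cscale: "cpx_poly (cscale g F) = smult (Cpx (fst g) (snd g)) (cpx_poly F)"
  using cpx_poly_rot[of "fst g" "fst F" "snd g" "snd F"] by (simp add: cscale_def add.commute)

lemma pcompose_power_left: "pcompose (p ^ n) q = (pcompose p q) ^ n"
  by (induct n) (simp_all add: pcompose_mult pcompose_1)

lemma poly_map_cnj_ofR [simp]: "poly (map_poly cnj P) (ofR t) = cnj (poly P (ofR t))"
  using cnj.poly_map_poly[of P "ofR t"] by simp

lemma real_factor_pair:
  fixes R :: "'a::linordered_field cpx poly"
  assumes "cpx_poly z = map_poly ofR L * R"
  shows "z = (L * map_poly cre R, L * map_poly cim R)"
proof -
  have "cpx_poly z = cpx_poly (L * map_poly cre R, L * map_poly cim R)"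
    using assms by (simp add: cpx_poly_realmult cpx_poly_decomp)
  then show ?thesis by (rule cpx_poly_inj)
qed

lemma poly_cre_cim:
  fixes R :: "'a::linordered_field cpx poly"
  shows "Cpx (poly (map_poly cre R) x) (poly (map_poly cim R) x) = poly R (ofR x)"
  using poly_cpx_poly_real[of "map_poly cre R" "map_poly cim R" x] cpx_poly_decomp[of R] by simp

lemma rot_corr_at:
  fixes R :: "'a::linordered_field cpx poly"
  assumes c0: "c \<noteq> 0" and z: "cpx_poly z = map_poly ofR ([:-x, 1:] ^ k) * R"
    and w: "poly R (ofR x) \<noteq> 0"
  shows "rot_corr c d (fst z) (snd z) x = rot_corr_val c d (cre (poly R (ofR x))) (cim (poly R (ofR x)))"
proof -
  let ?U = "map_poly cre R" and ?V = "map_poly cim R"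
  have zz: "z = ([:-x, 1:] ^ k * ?U, [:-x, 1:] ^ k * ?V)" by (rule real_factor_pair[OF z])
  have pc: "Cpx (poly ?U x) (poly ?V x) = poly R (ofR x)" by (rule poly_cre_cim)
  then have "poly ?U x \<noteq> 0 \<or> poly ?V x \<noteq> 0" using w by (metis zero_cpx_def)
  then have "rot_corr c d (fst z) (snd z) x = rot_corr_val c d (poly ?U x) (poly ?V x)"
    unfolding zz fst_conv snd_conv by (rule rot_corr_common_factor[OF c0 refl refl])
  then show ?thesis by (simp flip: pc)
qed

definition frac_restr :: "'a::comm_ring_1 poly \<times> 'a poly \<Rightarrow> 'a poly \<times> 'a poly \<Rightarrow> 'a poly \<times> 'a poly \<Rightarrow> 'a poly \<times> 'a poly" where
  "frac_restr F G z = cmul (restr F z) (cconj (restr G z))"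

lemma cpx_poly_frac_restr:
  "cpx_poly (frac_restr F G z) = pcompose (cpx_poly F) (cpx_poly z) * map_poly cnj (pcompose (cpx_poly G) (cpx_poly z))"
  by (simp add: frac_restr_def cpx_poly_cmul cpx_poly_restr cpx_poly_cconj)

text \<open>Along a line \<open>t \<mapsto> z\<^sub>0 + e (t - t\<^sub>0)\<close> through a common zero \<open>z\<^sub>0\<close> of multiplicities
  \<open>a\<close> of \<open>F\<close> and \<open>b\<close> of \<open>G\<close>, the restriction of \<open>F cnj(G)\<close> has the real factor
  \<open>(t - t\<^sub>0)\<^bsup>a+b\<^esup>\<close>, and its cofactor takes the value \<open>e\<^sup>a cnj(e)\<^sup>b F\<^sub>1(z\<^sub>0) cnj(G\<^sub>1(z\<^sub>0))\<close>
  at \<open>t\<^sub>0\<close>; so \<open>rot_corr\<close> there only sees this value.\<close>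

lemma rot_corr_frac_restr_line:
  fixes F G :: "'a::linordered_field poly \<times> 'a poly"
  assumes c0: "c \<noteq> 0"
    and F: "cpx_poly F = [:-z0, 1:] ^ a * F1" and G: "cpx_poly G = [:-z0, 1:] ^ b * G1"
    and w: "poly F1 z0 * cnj (poly G1 z0) \<noteq> 0"
    and L: "pcompose [:-z0, 1:] (cpx_poly z) = smult e (map_poly ofR [:-t, 1:])"
      "poly (cpx_poly z) (ofR t) = z0" "e \<noteq> 0"
  shows "rot_corr c d (fst (frac_restr F G z)) (snd (frac_restr F G z)) t
    = rot_corr_val c d (cre (e ^ a * cnj e ^ b * (poly F1 z0 * cnj (poly G1 z0))))
        (cim (e ^ a * cnj e ^ b * (poly F1 z0 * cnj (poly G1 z0))))"
proof -
  define M where "M = map_poly ofR [:-t, 1:]"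
  define R where "R = smult (e ^ a * cnj e ^ b)
    (pcompose F1 (cpx_poly z) * map_poly cnj (pcompose G1 (cpx_poly z)))"
  have "cpx_poly (frac_restr F G z)
      = (smult e M) ^ a * pcompose F1 (cpx_poly z) * map_poly cnj ((smult e M) ^ b * pcompose G1 (cpx_poly z))"
    unfolding cpx_poly_frac_restr F G pcompose_mult pcompose_power_left L(1) M_def by simp
  also have "\<dots> = M ^ (a + b) * R"
  proof -
    have "map_poly cnj M = M" by (simp add: M_def map_cnj_ofR)
    then show ?thesis
      by (simp add: R_def cnj_poly.hom_mult cnj_poly.hom_power cnj.map_poly_hom_smult cnj.hom_power
          smult_power power_add mult_smult_left mult_smult_right algebra_simps)
  qed
  finally have "cpx_poly (frac_restr F G z) = map_poly ofR ([:-t, 1:] ^ (a + b)) * R"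
    by (simp add: M_def ofR_poly.hom_power)
  moreover have "poly R (ofR t) = e ^ a * cnj e ^ b * (poly F1 z0 * cnj (poly G1 z0))"
    by (simp add: R_def poly_pcompose L(2))
  ultimately show ?thesis using rot_corr_at[OF c0] w L(3) by simp
qed

lemma rot_corr_val_ii_power:
  fixes w :: "'a::linordered_field cpx"
  assumes "c \<noteq> 0"
  shows "rot_corr_val c d (cre (ii ^ n * w)) (cim (ii ^ n * w)) = rot_corr_val c d (cre w) (cim w)"
proof (induct n)
  case (Suc n)
  have "rot_corr_val c d (cre (ii ^ Suc n * w)) (cim (ii ^ Suc n * w))
      = rot_corr_val c d (- cim (ii ^ n * w)) (cre (ii ^ n * w))"
    by (simp add: mult.assoc)
  also have "\<dots> = rot_corr_val c d (cre (ii ^ n * w)) (cim (ii ^ n * w))"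
    by (rule rot_corr_val_times_ii[OF assms])
  finally show ?case using Suc by simp
qed simp

text \<open>At a corner \<open>x + i y\<close> the horizontal and the vertical side see the same value of
  \<open>rot_corr\<close>: their cofactor values differ by the power \<open>i\<^sup>a (-i)\<^sup>b\<close> of \<open>i\<close>.\<close>

lemma rot_corr_corner:
  fixes F G :: "'a::real_closed_field poly \<times> 'a poly"
  assumes F0: "cpx_poly F \<noteq> 0" and G0: "cpx_poly G \<noteq> 0" and c0: "c \<noteq> 0"
  shows "rot_corr c d (fst (frac_restr F G ([:0, 1:], [:y:]))) (snd (frac_restr F G ([:0, 1:], [:y:]))) x
       = rot_corr c d (fst (frac_restr F G ([:x:], [:0, 1:]))) (snd (frac_restr F G ([:x:], [:0, 1:]))) y"
proof -
  define z0 where "z0 = Cpx x y"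
  define a where "a = order z0 (cpx_poly F)"
  define b where "b = order z0 (cpx_poly G)"
  note F = cofac_factorization[OF F0, of z0, folded a_def]
  note G = cofac_factorization[OF G0, of z0, folded b_def]
  define w where "w = poly (cofac (cpx_poly F) z0) z0 * cnj (poly (cofac (cpx_poly G) z0) z0)"
  have "w \<noteq> 0" using F(2) G(2) by (simp add: w_def)
  have "rot_corr c d (fst (frac_restr F G ([:0, 1:], [:y:]))) (snd (frac_restr F G ([:0, 1:], [:y:]))) x
      = rot_corr_val c d (cre w) (cim w)"
    using rot_corr_frac_restr_line[OF c0 F(1) G(1), where z = "([:0, 1:], [:y:])" and e = 1 and t = x] \<open>w \<noteq> 0\<close>
    by (simp add: w_def cpx_poly_def z0_def pcompose_pCons cpx_eq_iff ofR.map_poly_pCons_hom)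
  also have "\<dots> = rot_corr_val c d (cre (ii ^ (a + 3 * b) * w)) (cim (ii ^ (a + 3 * b) * w))"
    by (rule rot_corr_val_ii_power[OF c0, symmetric])
  also have "\<dots> = rot_corr c d (fst (frac_restr F G ([:x:], [:0, 1:]))) (snd (frac_restr F G ([:x:], [:0, 1:]))) y"
    using rot_corr_frac_restr_line[OF c0 F(1) G(1), where z = "([:x:], [:0, 1:])" and e = ii and t = y] \<open>w \<noteq> 0\<close>
    by (simp add: w_def cpx_poly_def z0_def pcompose_pCons cpx_eq_iff ofR.map_poly_pCons_hom
        minus_ii_power power_add)
  finally show ?thesis .
qed

section \<open>Invariance of the winding number\<close>

lemma Ind_lt_neg_left: "Ind_lt (- P) Q a b = - Ind_lt P Q a b"
  using Ind_lt_scale[of "-1" 1 P Q a b] by simp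

lemma Ind_neg_left: "Ind (- P) Q a b = - Ind P Q a b"
  by (simp add: Ind_def Ind_lt_neg_left)

lemma Wnd_eq_Ind_antisym:
  assumes "x0 < x1" and "y0 < y1"
  shows "Wnd x0 x1 y0 y1 H =
    (Ind_antisym (fst (H ([:0, 1:], [:y0:]))) (snd (H ([:0, 1:], [:y0:]))) x0 x1
   + Ind_antisym (fst (H ([:x1:], [:0, 1:]))) (snd (H ([:x1:], [:0, 1:]))) y0 y1
   - Ind_antisym (fst (H ([:0, 1:], [:y1:]))) (snd (H ([:0, 1:], [:y1:]))) x0 x1
   - Ind_antisym (fst (H ([:x0:], [:0, 1:]))) (snd (H ([:x0:], [:0, 1:]))) y0 y1) / 4"
  unfolding Wnd_def wnd_def times_i_def Ind_antisym_def
  using assms by (simp add: Ind_neg_left Ind_lt_neg_left Ind_def field_simps)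

lemma frac_restr_cscale:
  "frac_restr (cscale (c, d) F) G z =
     (smult c (fst (frac_restr F G z)) - smult d (snd (frac_restr F G z)),
      smult d (fst (frac_restr F G z)) + smult c (snd (frac_restr F G z)))"
  by (rule cpx_poly_inj)
    (simp add: cpx_poly_frac_restr cpx_poly_cscale pcompose_smult mult_smult_left cpx_poly_rot)

lemma Wnd_frac_restr_cscale:
  fixes F G :: "'a::real_closed_field poly \<times> 'a poly"
  assumes F0: "cpx_poly F \<noteq> 0" and G0: "cpx_poly G \<noteq> 0" and cd: "(c, d) \<noteq> (0, 0)"
    and "x0 < x1" "y0 < y1"
  shows "Wnd x0 x1 y0 y1 (frac_restr (cscale (c, d) F) G) = Wnd x0 x1 y0 y1 (frac_restr F G)"
proof (cases "c = 0")
  case True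
  then have "d \<noteq> 0" using cd by simp
  then show ?thesis
    unfolding Wnd_eq_Ind_antisym[OF assms(4,5)] frac_restr_cscale True
    by (simp add: Ind_antisym_rotate_quarter)
next
  case False
  define R where "R z t = rot_corr c d (fst (frac_restr F G z)) (snd (frac_restr F G z)) t" for z t
  have side: "Ind_antisym (fst (frac_restr (cscale (c, d) F) G z)) (snd (frac_restr (cscale (c, d) F) G z)) a b
      = Ind_antisym (fst (frac_restr F G z)) (snd (frac_restr F G z)) a b + (R z b - R z a)"
    if "a < b" for z a b
    unfolding frac_restr_cscale fst_conv snd_conv R_def by (rule Ind_antisym_rotate[OF False that])
  have "R ([:0, 1:], [:y:]) x = R ([:x:], [:0, 1:]) y" for x y
    unfolding R_def by (rule rot_corr_corner[OF F0 G0 False])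
  then show ?thesis
    unfolding Wnd_eq_Ind_antisym[OF assms(4,5)] using assms(4,5) by (simp add: side)
qed

theorem lemma3p7:
  fixes Fa Fb Ga Gb :: "'a::real_closed_field poly"
    and gr gi x0 x1 y0 y1 :: "'a"
  assumes "(Fa, Fb) \<noteq> (0, 0)"
    and "(Ga, Gb) \<noteq> (0, 0)"
    and "(gr, gi) \<noteq> (0, 0)"
    and "x0 < x1" and "y0 < y1"
  shows "Wnd_frac x0 x1 y0 y1 (Fa, Fb) (Ga, Gb)
       = Wnd_frac x0 x1 y0 y1 (cscale (gr, gi) (Fa, Fb)) (Ga, Gb)"
proof -
  have "cpx_poly (Fa, Fb) \<noteq> 0" "cpx_poly (Ga, Gb) \<noteq> 0"
    using assms(1,2) by (simp_all add: cpx_poly_zero_iff)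
  then show ?thesis
    unfolding Wnd_frac_def frac_restr_def[symmetric]
    using Wnd_frac_restr_cscale[OF _ _ assms(3-5)] by simp
qed

end
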